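(* Let $\mathcal{A}=(A_m)_{m\ge m_0}$ and $\mathcal{B}=(B_n)_{n\ge n_0}$ be 1-filtrations of algebras that are represented by languages $\mathcal{L}_A\subseteq\Sigma_A^*$ and $\mathcal{L}_B\subseteq\Sigma_B^*$, respectively. Then: (a) for all $m,n\gg0$ and every $d\in\mathbb{N}_0$ there is a bijection $[\operatorname{Mon}(A_m\boxtimes B_n)]_d\to(\mathcal{L}_A\boxtimes\mathcal{L}_B)^d_{m,n}$, i.e. the 2-filtration $(A_m\boxtimes B_n)_{m\ge m_0,n\ge n_0}$ is represented by $\mathcal{L}_A\boxtimes\mathcal{L}_B$; (b) if $\mathcal{L}_A$ and $\mathcal{L}_B$ are regular languages, then the equivariant Hilbert series $\operatorname{equivH}_{\mathcal{A}\boxtimes\mathcal{B}}(s_1,s_2,t)=\sum_{m\ge m_0,n\ge n_0}\sum_{d\ge0}\dim_{\mathbb{K}}[A_m\boxtimes B_n]_d\,t^ds_1^ms_2^n$ is a rational function.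
   Context: $\mathbb{K}$ is a field. Fix $c_1,c_2\ge1$. A 1-filtration $\mathcal{A}=(A_m)_{m\ge m_0}$ is a family where each $A_m$ is a finitely generated subalgebra of $R_m=\mathbb{K}[x_{i,j}: i\in[c_1], j\in[m]]$ generated by finitely many monomials all of the same degree $d_1$ (independent of $m$), together with $\mathbb{K}$-algebra homomorphisms $A_m\to A_n$ for $m\le n$ forming a direct system; $A_m$ is graded by $[A_m]_d=A_m\cap[R_m]_{dd_1}$, and $[\operatorname{Mon}(A_m)]_d$ is the set of monomials in $[A_m]_d$. Similarly $B_n\subseteq S_n=\mathbb{K}[y_{i,j}: i\in[c_2], j\in[n]]$ (distinct variables) is generated by monomials of degree $d_2$, with $[B_n]_d=B_n\cap[S_n]_{dd_2}$. The Segre product $A_m\boxtimes B_n$ is the subalgebra of $\mathbb{K}[x_{i,j},y_{k,l}]$ generated by all products $ab$ with $a$ a generating monomial of $A_m$ and $b$ a generating monomial of $B_n$, graded by $[A_m\boxtimes B_n]_d$ = its elements of degree $d(d_1+d_2)$; $[\operatorname{Mon}(A_m\boxtimes B_n)]_d$ is the set of monomials in this component. Alphabets: $\Sigma_A=\{\tau_{1,1},\dots,\tau_{1,a},\alpha_1,\dots,\alpha_p\}$, $\Sigma_B=\{\tau_{2,1},\dots,\tau_{2,b},\beta_1,\dots,\beta_q\}$. For a language $\mathcal{L}_A\subseteq\Sigma_A^*$, $(\mathcal{L}_A)^d_m$ denotes the set of words in $\mathcal{L}_A$ with exactly $m$ occurrences of letters among $\tau_{1,1},\dots,\tau_{1,a}$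 and exactly $d$ occurrences of letters among $\alpha_1,\dots,\alpha_p$; similarly $(\mathcal{L}_B)^d_n$. $\mathcal{A}$ is represented by $\mathcal{L}_A$ if there is $\tilde m$ such that for all $m\ge\tilde m$ and $d\in\mathbb{N}_0$ there is a bijection $[\operatorname{Mon}(A_m)]_d\to(\mathcal{L}_A)^d_m$; similarly for $\mathcal{B}$. Segre product of languages: every word in $\Sigma_A^*$ is uniquely $u_1\alpha_{i_1}\cdots u_d\alpha_{i_d}u_{d+1}$ with $u_k$ words in the $\tau_{1,\cdot}$ letters, and similarly for $\Sigma_B^*$ with $v_k$ words in the $\tau_{2,\cdot}$ letters; $\mathcal{L}_A\boxtimes\mathcal{L}_B$ is the language on $\{\tau_{1,1},\dots,\tau_{1,a},\tau_{2,1},\dots,\tau_{2,b}\}\cup\{\gamma_{i,j}:i\in[p],j\in[q]\}$ of all words $u_1v_1\gamma_{i_1,j_1}\cdots u_dv_d\gamma_{i_d,j_d}u_{d+1}v_{d+1}$ with $u_1\alpha_{i_1}\cdots u_d\alpha_{i_d}u_{d+1}\in\mathcal{L}_A$ and $v_1\beta_{j_1}\cdots v_d\beta_{j_d}v_{d+1}\in\mathcal{L}_B$. $(\mathcal{L}_A\boxtimes\mathcal{L}_B)^d_{m,n}$ is the set of its words with exactly $m$ letters $\tau_{1,\cdot}$, $n$ letters $\tau_{2,\cdot}$ and $d$ letters $\gamma_{\cdot,\cdot}$. Regular languages are those recognized by a finite automaton. *)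

theory Defs
  imports Main "HOL-Library.Poly_Mapping"
begin

datatype var = X nat nat | Y nat nat

type_synonym monomial = "var \<Rightarrow>\<^sub>0 nat"

definition mdeg :: "monomial \<Rightarrow> nat" where
  "mdeg u = (\<Sum>v\<in>Poly_Mapping.keys u. Poly_Mapping.lookup u v)"

text \<open>For an algebra generated by monomials
  all of degree d1, these are exactly the monomials of the graded component [A]_d.\<close>
fun mon_pow :: "monomial set \<Rightarrow> nat \<Rightarrow> monomial set" where
  "mon_pow G 0 = {0}"
| "mon_pow G (Suc d) = {g + u | g u. g \<in> G \<and> u \<in> mon_pow G d}"

definition one_filtration ::
  "(nat \<Rightarrow> nat \<Rightarrow> var) \<Rightarrow> nat \<Rightarrow> nat \<Rightarrow> nat \<Rightarrow> (nat \<Rightarrow> monomial set) \<Rightarrow> bool" where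
  "one_filtration v c d1 m0 G \<longleftrightarrow>
     (\<forall>m\<ge>m0. finite (G m) \<and>
        (\<forall>g\<in>G m. mdeg g = d1 \<and> Poly_Mapping.keys g \<subseteq> {v i j | i j. i \<in> {1..c} \<and> j \<in> {1..m}}))"

definition segre_gens :: "monomial set \<Rightarrow> monomial set \<Rightarrow> monomial set" where
  "segre_gens GA GB = {a + b | a b. a \<in> GA \<and> b \<in> GB}"

text \<open>Letters of \<Sigma>_A: Inl i = \<tau>_{1,i} (i \<in> [a]), Inr i = \<alpha>_i (i \<in> [p]).\<close>
definition sigma :: "nat \<Rightarrow> nat \<Rightarrow> (nat + nat) set" where
  "sigma a p = Inl ` {1..a} \<union> Inr ` {1..p}"

definition count_lang :: "(nat + nat) list set \<Rightarrow> nat \<Rightarrow> nat \<Rightarrow> (nat + nat) list set" where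
  "count_lang L m d = {w \<in> L. length (filter isl w) = m \<and> length (filter (\<lambda>x. \<not> isl x) w) = d}"

definition represented ::
  "nat \<Rightarrow> nat \<Rightarrow> nat \<Rightarrow> (nat \<Rightarrow> monomial set) \<Rightarrow> (nat + nat) list set \<Rightarrow> bool" where
  "represented a p m0 G L \<longleftrightarrow> L \<subseteq> lists (sigma a p) \<and>
     (\<exists>mt\<ge>m0. \<forall>m\<ge>mt. \<forall>d. \<exists>f. bij_betw f (mon_pow (G m) d) (count_lang L m d))"

definition regular :: "'a set \<Rightarrow> 'a list set \<Rightarrow> bool" where
  "regular \<Sigma> L \<longleftrightarrow> (\<exists>(Q::nat set) q0 (\<delta>::nat \<Rightarrow> 'a \<Rightarrow> nat) F.
      finite Q \<and> q0 \<in> Q \<and> (\<forall>q\<in>Q. \<forall>x\<in>\<Sigma>. \<delta> q x \<in> Q) \<and> F \<subseteq> Q \<and>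
      L = {w \<in> lists \<Sigma>. foldl \<delta> q0 w \<in> F})"

text \<open>Letters of the Segre alphabet: T1 i = \<tau>_{1,i}, T2 j = \<tau>_{2,j}, Gam i j = \<gamma>_{i,j}.\<close>
datatype seg_letter = T1 nat | T2 nat | Gam nat nat

text \<open>The word u_1 \<alpha>_{i_1} ... u_d \<alpha>_{i_d} u_{d+1}, given by the list of pairs
  (u_k, i_k) and the final block u_{d+1}.  Every word of \<Sigma>_A^* arises uniquely so.\<close>
definition word_of :: "(nat list \<times> nat) list \<Rightarrow> nat list \<Rightarrow> (nat + nat) list" where
  "word_of ps ul = concat (map (\<lambda>(u, i). map Inl u @ [Inr i]) ps) @ map Inl ul"

definition segre_lang ::
  "(nat + nat) list set \<Rightarrow> (nat + nat) list set \<Rightarrow> seg_letter list set" where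
  "segre_lang LA LB = {concat (map2 (\<lambda>(u, i) (v, j). map T1 u @ map T2 v @ [Gam i j]) ps qs)
        @ map T1 ul @ map T2 vl | ps ul qs vl.
        length ps = length qs \<and> word_of ps ul \<in> LA \<and> word_of qs vl \<in> LB}"

fun is_T1 :: "seg_letter \<Rightarrow> bool" where
  "is_T1 (T1 _) = True" | "is_T1 _ = False"
fun is_T2 :: "seg_letter \<Rightarrow> bool" where
  "is_T2 (T2 _) = True" | "is_T2 _ = False"
fun is_Gam :: "seg_letter \<Rightarrow> bool" where
  "is_Gam (Gam _ _) = True" | "is_Gam _ = False"

definition seg_count :: "seg_letter list set \<Rightarrow> nat \<Rightarrow> nat \<Rightarrow> nat \<Rightarrow> seg_letter list set" where
  "seg_count L m n d = {w \<in> L. length (filter is_T1 w) = m \<and> length (filter is_T2 w) = n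
                              \<and> length (filter is_Gam w) = d}"

text \<open>Coefficient of s1^m s2^n t^d: dim [A_m \<boxtimes> B_n]_d, which for a monomial algebra
  is the number of monomials in that component.\<close>
definition equivH :: "nat \<Rightarrow> nat \<Rightarrow> (nat \<Rightarrow> monomial set) \<Rightarrow> (nat \<Rightarrow> monomial set)
    \<Rightarrow> nat \<times> nat \<times> nat \<Rightarrow> int" where
  "equivH m0 n0 GA GB = (\<lambda>(m, n, d).
     if m \<ge> m0 \<and> n \<ge> n0 then int (card (mon_pow (segre_gens (GA m) (GB n)) d)) else 0)"

definition conv3 :: "(nat \<times> nat \<times> nat \<Rightarrow> int) \<Rightarrow> (nat \<times> nat \<times> nat \<Rightarrow> int)
    \<Rightarrow> nat \<times> nat \<times> nat \<Rightarrow> int" where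
  "conv3 f g = (\<lambda>(i, j, k). \<Sum>a\<le>i. \<Sum>b\<le>j. \<Sum>c\<le>k. f (a, b, c) * g (i - a, j - b, k - c))"

definition rational3 :: "(nat \<times> nat \<times> nat \<Rightarrow> int) \<Rightarrow> bool" where
  "rational3 H \<longleftrightarrow> (\<exists>P Q. finite {x. P x \<noteq> 0} \<and> finite {x. Q x \<noteq> 0} \<and> Q \<noteq> (\<lambda>_. 0)
      \<and> conv3 Q H = P)"

end

theory Submission
  imports Defs "HOL-Computational_Algebra.Formal_Power_Series" "HOL-Library.Multiset_Order"
begin

text \<open>Part (a): the variables of \<open>A\<^sub>m\<close> and \<open>B\<^sub>n\<close> are disjoint, so a product of \<open>d\<close>
  generators of \<open>A\<^sub>m \<boxtimes> B\<^sub>n\<close> splits uniquely into a product of \<open>d\<close> generators of \<open>A\<^sub>m\<close>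
  and one of \<open>d\<close> generators of \<open>B\<^sub>n\<close>; likewise a word of \<open>L\<^sub>A \<boxtimes> L\<^sub>B\<close> is the unique merge
  of a word of \<open>L\<^sub>A\<close> and a word of \<open>L\<^sub>B\<close> with the same number \<open>d\<close> of letters \<open>\<alpha>\<close> resp. \<open>\<beta>\<close>.
  Both sides of (a) are therefore in bijection with products of the two one-sided sets.

  Part (b): the coefficient of \<open>s\<^sub>1\<^sup>m s\<^sub>2\<^sup>n t\<^sup>d\<close> is \<open>h\<^sub>A(m, d) h\<^sub>B(n, d)\<close>, where \<open>h\<^sub>A(m, d)\<close>
  counts the monomials of \<open>[A\<^sub>m]\<^sub>d\<close>.  Such a function is \<^emph>\<open>recognizable\<close>, i.e. counts weighted
  paths in a finite automaton reading two kinds of letters: for large \<open>m\<close> it counts the words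
  accepted by a DFA for \<open>L\<^sub>A\<close>, and each of the finitely many remaining \<open>A\<^sub>m\<close> contributes the
  Hilbert function of a fixed monomial algebra, which counts the exponent vectors avoiding a
  finite set of minimal non-normal ones (Dickson's lemma) and is recognized by an automaton
  reading these vectors.  Recognizable functions are closed under sums, shifts and restrictions,
  and \<open>h\<^sub>A(m, d) h\<^sub>B(n, d)\<close> is counted by a product automaton reading three kinds of letters.
  The generating series of such an automaton solves a finite linear system whose coefficients
  vanish at the origin, and Gaussian elimination shows that the solution is rational.\<close>

section \<open>Rational power series in three variables\<close>

type_synonym fps3 = "int fps fps fps"

abbreviation coeff3 :: "fps3 \<Rightarrow> nat \<Rightarrow> nat \<Rightarrow> nat \<Rightarrow> int" where
  "coeff3 f i j k \<equiv> fps_nth (fps_nth (fps_nth f i) j) k"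

lemma fps3_eqI: "(\<And>i j k. coeff3 f i j k = coeff3 g i j k) \<Longrightarrow> f = g"
  by (intro fps_ext) blast

lemma coeff3_mult:
  "coeff3 (f * g) i j k = (\<Sum>a\<le>i. \<Sum>b\<le>j. \<Sum>c\<le>k. coeff3 f a b c * coeff3 g (i - a) (j - b) (k - c))"
  by (simp add: fps_mult_nth fps_sum_nth atLeast0AtMost)

lemma coeff3_sum: "coeff3 (sum f A) i j k = (\<Sum>x\<in>A. coeff3 (f x) i j k)"
  by (simp add: fps_sum_nth)

lemma coeff3_of_int_mult: "coeff3 (of_int a * f) i j k = a * coeff3 f i j k"
  by (simp flip: fps_of_int)

definition X1 :: fps3 where "X1 = fps_X"
definition X2 :: fps3 where "X2 = fps_const fps_X"
definition X3 :: fps3 where "X3 = fps_const (fps_const fps_X)"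

lemma coeff3_X_mult:
  "coeff3 (X1 * f) i j k = (if i = 0 then 0 else coeff3 f (i - 1) j k)"
  "coeff3 (X2 * f) i j k = (if j = 0 then 0 else coeff3 f i (j - 1) k)"
  "coeff3 (X3 * f) i j k = (if k = 0 then 0 else coeff3 f i j (k - 1))"
  by (simp_all add: X1_def X2_def X3_def fps_X_mult_nth)

lemma coeff3_X_0_0_0: "coeff3 X1 0 0 0 = 0" "coeff3 X2 0 0 0 = 0" "coeff3 X3 0 0 0 = 0"
  by (simp_all add: X1_def X2_def X3_def)

definition series3 :: "(nat \<times> nat \<times> nat \<Rightarrow> int) \<Rightarrow> fps3" where
  "series3 h = Abs_fps (\<lambda>i. Abs_fps (\<lambda>j. Abs_fps (\<lambda>k. h (i, j, k))))"

lemma coeff3_series3 [simp]: "coeff3 (series3 h) i j k = h (i, j, k)"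
  by (simp add: series3_def)

definition support3 :: "fps3 \<Rightarrow> (nat \<times> nat \<times> nat) set" where
  "support3 f = {(i, j, k). coeff3 f i j k \<noteq> 0}"

definition poly3 :: "fps3 \<Rightarrow> bool" where
  "poly3 f \<longleftrightarrow> finite (support3 f)"

lemma poly3_add: "poly3 f \<Longrightarrow> poly3 g \<Longrightarrow> poly3 (f + g)"
  unfolding poly3_def
  by (rule finite_subset[of _ "support3 f \<union> support3 g"]) (auto simp: support3_def)

lemma poly3_mult:
  assumes "poly3 f" "poly3 g"
  shows "poly3 (f * g)"
proof -
  let ?plus = "\<lambda>((a, b, c), (a', b', c')). (a + a', b + b', c + c')"
  have "support3 (f * g) \<subseteq> ?plus ` (support3 f \<times> support3 g)"
  proof
    fix x assume "x \<in> support3 (f * g)"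
    then obtain i j k where x: "x = (i, j, k)" and nz: "coeff3 (f * g) i j k \<noteq> 0"
      by (auto simp: support3_def)
    then obtain a b c where "a \<le> i" "b \<le> j" "c \<le> k"
      "coeff3 f a b c \<noteq> 0" "coeff3 g (i - a) (j - b) (k - c) \<noteq> 0"
      unfolding coeff3_mult by (metis (no_types, lifting) atMost_iff mult_zero_left
        mult_zero_right sum.neutral)
    then have "((a, b, c), (i - a, j - b, k - c)) \<in> support3 f \<times> support3 g"
      by (simp add: support3_def)
    moreover have "x = ?plus ((a, b, c), (i - a, j - b, k - c))"
      using \<open>a \<le> i\<close> \<open>b \<le> j\<close> \<open>c \<le> k\<close> by (simp add: x)
    ultimately show "x \<in> ?plus ` (support3 f \<times> support3 g)" by blast
  qed
  then show ?thesis
    using assms unfolding poly3_def by (meson finite_SigmaI finite_imageI finite_subset)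
qed

lemma poly3_of_int: "poly3 (of_int z)"
  unfolding poly3_def
  by (rule finite_subset[of _ "{(0, 0, 0)}"]) (auto simp: support3_def split: if_splits)

lemma poly3_X: "poly3 X1" "poly3 X2" "poly3 X3"
  unfolding poly3_def
  by (rule finite_subset[of _ "{(1, 0, 0), (0, 1, 0), (0, 0, 1)}"];
      auto simp: support3_def X1_def X2_def X3_def fps_X_def fps_const_def split: if_splits)+

definition rational_fps3 :: "fps3 \<Rightarrow> bool" where
  "rational_fps3 F \<longleftrightarrow> (\<exists>P Q. poly3 P \<and> poly3 Q \<and> Q \<noteq> 0 \<and> Q * F = P)"

lemma rational_fps3_poly3: "poly3 F \<Longrightarrow> rational_fps3 F"
  unfolding rational_fps3_def using poly3_of_int[of 1] by (intro exI[of _ F] exI[of _ 1]) auto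

lemma rational_fps3_add:
  assumes "rational_fps3 F" "rational_fps3 G"
  shows "rational_fps3 (F + G)"
proof -
  obtain P Q where F: "poly3 P" "poly3 Q" "Q \<noteq> 0" "Q * F = P"
    using assms(1) rational_fps3_def by blast
  obtain P' Q' where G: "poly3 P'" "poly3 Q'" "Q' \<noteq> 0" "Q' * G = P'"
    using assms(2) rational_fps3_def by blast
  have "(Q * Q') * (F + G) = Q' * P + Q * P'"
    using F(4) G(4) by (simp add: algebra_simps)
  with F G show ?thesis
    unfolding rational_fps3_def by (metis poly3_add poly3_mult no_zero_divisors)
qed

lemma rational_fps3_mult:
  assumes "rational_fps3 F" "rational_fps3 G"
  shows "rational_fps3 (F * G)"
proof -
  obtain P Q where F: "poly3 P" "poly3 Q" "Q \<noteq> 0" "Q * F = P"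
    using assms(1) rational_fps3_def by blast
  obtain P' Q' where G: "poly3 P'" "poly3 Q'" "Q' \<noteq> 0" "Q' * G = P'"
    using assms(2) rational_fps3_def by blast
  have "(Q * Q') * (F * G) = P * P'"
    using F(4) G(4) by (metis mult.assoc mult.left_commute)
  with F G show ?thesis
    unfolding rational_fps3_def by (metis poly3_mult no_zero_divisors)
qed

lemma rational_fps3_of_int: "rational_fps3 (of_int z)"
  by (rule rational_fps3_poly3 poly3_of_int)+

lemma rational_fps3_0: "rational_fps3 0" and rational_fps3_1: "rational_fps3 1"
  using rational_fps3_of_int[of 0] rational_fps3_of_int[of 1] by simp_all

lemma rational_fps3_X: "rational_fps3 X1" "rational_fps3 X2" "rational_fps3 X3"
  by (rule rational_fps3_poly3 poly3_X)+

lemma rational_fps3_diff: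
  assumes "rational_fps3 F" "rational_fps3 G"
  shows "rational_fps3 (F - G)"
  using rational_fps3_add[OF assms(1) rational_fps3_mult[OF rational_fps3_of_int[of "-1"] assms(2)]]
  by simp

lemma rational_fps3_sum: "(\<And>x. x \<in> A \<Longrightarrow> rational_fps3 (f x)) \<Longrightarrow> rational_fps3 (sum f A)"
  by (induction A rule: infinite_finite_induct)
    (auto intro: rational_fps3_add rational_fps3_0)

lemma rational_fps3_cancel:
  assumes "rational_fps3 D" "D \<noteq> 0" "rational_fps3 (D * F)"
  shows "rational_fps3 F"
proof -
  obtain P Q where D: "poly3 P" "poly3 Q" "Q \<noteq> 0" "Q * D = P"
    using assms(1) rational_fps3_def by blast
  obtain P' Q' where DF: "poly3 P'" "poly3 Q'" "Q' \<noteq> 0" "Q' * (D * F) = P'"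
    using assms(3) rational_fps3_def by blast
  have "(Q' * P) * F = Q * P'"
    using D(4) DF(4) by (metis mult.assoc mult.left_commute)
  moreover have "Q' * P \<noteq> 0"
    using D(3,4) DF(3) assms(2) by auto
  ultimately show ?thesis
    using D DF unfolding rational_fps3_def by (metis poly3_mult)
qed

text \<open>Gaussian elimination without division: the eliminated equation is multiplied by
  \<open>D = 1 - a z z\<close>, which has constant term 1 and hence is nonzero, and the diagonal
  term \<open>a z z * x s\<close> is added back so that the new coefficients again vanish at the origin.\<close>

lemma linear_system_eliminate:
  fixes x b :: "'s \<Rightarrow> fps3" and a :: "'s \<Rightarrow> 's \<Rightarrow> fps3"
  assumes fin: "finite S" and z: "z \<notin> S"
    and eq: "\<forall>s\<in>insert z S. x s = b s + (\<Sum>s'\<in>insert z S. a s s' * x s')"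
    and s: "s \<in> S"
  shows "x s = ((1 - a z z) * b s + a s z * b z)
     + (\<Sum>s'\<in>S. ((1 - a z z) * a s s' + a s z * a z s' + (if s = s' then a z z else 0)) * x s')"
proof -
  let ?D = "1 - a z z"
  have "x z = b z + a z z * x z + (\<Sum>s'\<in>S. a z s' * x s')"
    using eq[rule_format, of z] fin z by (simp add: sum.insert add.assoc)
  then have Dz: "?D * x z = b z + (\<Sum>s'\<in>S. a z s' * x s')"
    by (simp add: algebra_simps)
  have xs: "x s = b s + a s z * x z + (\<Sum>s'\<in>S. a s s' * x s')"
    using eq[rule_format, of s] fin z s by (simp add: sum.insert add.assoc)
  have "?D * x s = ?D * b s + a s z * (?D * x z) + (\<Sum>s'\<in>S. ?D * a s s' * x s')"
    by (subst xs) (simp add: algebra_simps sum_distrib_left)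
  also have "\<dots> = ?D * b s + a s z * b z + (\<Sum>s'\<in>S. (?D * a s s' + a s z * a z s') * x s')"
    unfolding Dz by (simp add: algebra_simps sum_distrib_left flip: sum.distrib)
  finally have Dx: "?D * x s = ?D * b s + a s z * b z + (\<Sum>s'\<in>S. (?D * a s s' + a s z * a z s') * x s')" .
  have diag: "(\<Sum>s'\<in>S. (if s = s' then a z z else 0) * x s') = a z z * x s"
    using fin s by (simp add: if_distrib[of "\<lambda>c. c * _"] cong: if_cong)
  have "x s = ?D * x s + a z z * x s"
    by (simp add: algebra_simps)
  also have "\<dots> = ?D * b s + a s z * b z + (\<Sum>s'\<in>S. (?D * a s s' + a s z * a z s') * x s'
        + (if s = s' then a z z else 0) * x s')"
    unfolding Dx sum.distrib diag by simp
  finally show ?thesis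
    by (simp add: algebra_simps)
qed

lemma rational_fps3_linear_system:
  fixes x :: "'s \<Rightarrow> fps3"
  assumes "finite S"
    and "\<forall>s\<in>S. x s = b s + (\<Sum>s'\<in>S. a s s' * x s')"
    and "\<forall>s\<in>S. \<forall>s'\<in>S. rational_fps3 (a s s') \<and> coeff3 (a s s') 0 0 0 = 0"
    and "\<forall>s\<in>S. rational_fps3 (b s)"
  shows "\<forall>s\<in>S. rational_fps3 (x s)"
  using assms
proof (induction S arbitrary: a b rule: finite_induct)
  case empty
  then show ?case by simp
next
  case (insert z S)
  let ?D = "1 - a z z"
  define b' where "b' s = ?D * b s + a s z * b z" for s
  define a' where "a' s s' = ?D * a s s' + a s z * a z s' + (if s = s' then a z z else 0)" for s s'
  have "\<forall>s\<in>S. x s = b' s + (\<Sum>s'\<in>S. a' s s' * x s')"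
    using linear_system_eliminate[OF insert.hyps insert.prems(1)] unfolding a'_def b'_def by blast
  moreover have "\<forall>s\<in>S. \<forall>s'\<in>S. rational_fps3 (a' s s') \<and> coeff3 (a' s s') 0 0 0 = 0"
    using insert.prems(2) unfolding a'_def
    by (auto intro!: rational_fps3_add rational_fps3_mult rational_fps3_diff
        rational_fps3_1 rational_fps3_0)
  moreover have "\<forall>s\<in>S. rational_fps3 (b' s)"
    using insert.prems(2,3) unfolding b'_def
    by (auto intro!: rational_fps3_add rational_fps3_mult rational_fps3_diff
        rational_fps3_1)
  ultimately have IH: "\<forall>s\<in>S. rational_fps3 (x s)"
    using insert.IH by blast
  have "x z = b z + a z z * x z + (\<Sum>s'\<in>S. a z s' * x s')"
    using insert.prems(1)[rule_format, of z] insert.hyps by (simp add: sum.insert add.assoc)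
  then have "?D * x z = b z + (\<Sum>s'\<in>S. a z s' * x s')"
    by (simp add: algebra_simps)
  then have "rational_fps3 (?D * x z)"
    using insert.prems(2,3) IH by (auto intro!: rational_fps3_add rational_fps3_mult rational_fps3_sum)
  moreover have "rational_fps3 ?D"
    using insert.prems(2) by (auto intro!: rational_fps3_diff rational_fps3_1)
  moreover have "coeff3 ?D 0 0 0 = 1"
    using insert.prems(2) by simp
  then have "?D \<noteq> 0"
    by auto
  ultimately have "rational_fps3 (x z)"
    using rational_fps3_cancel by blast
  then show ?case
    using IH by simp
qed

definition linrec3 :: "'s set \<Rightarrow> ('s \<Rightarrow> int) \<Rightarrow> ('s \<Rightarrow> 's \<Rightarrow> int) \<Rightarrow> ('s \<Rightarrow> 's \<Rightarrow> int)
    \<Rightarrow> ('s \<Rightarrow> 's \<Rightarrow> int) \<Rightarrow> ('s \<Rightarrow> nat \<times> nat \<times> nat \<Rightarrow> int) \<Rightarrow> bool" where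
  "linrec3 S c A1 A2 A3 h \<longleftrightarrow> finite S \<and> (\<forall>s\<in>S. \<forall>i j k. h s (i, j, k) =
      (if i = 0 \<and> j = 0 \<and> k = 0 then c s else 0)
      + (if 0 < i then \<Sum>s'\<in>S. A1 s s' * h s' (i - 1, j, k) else 0)
      + (if 0 < j then \<Sum>s'\<in>S. A2 s s' * h s' (i, j - 1, k) else 0)
      + (if 0 < k then \<Sum>s'\<in>S. A3 s s' * h s' (i, j, k - 1) else 0))"

lemma linrec3_rational:
  assumes h: "linrec3 S c A1 A2 A3 h" and "s \<in> S"
  shows "rational_fps3 (series3 (h s))"
proof -
  define a where "a s s' = X1 * of_int (A1 s s') + X2 * of_int (A2 s s') + X3 * of_int (A3 s s')"
    for s s'
  have fin: "finite S"
    using h linrec3_def by blast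
  have "series3 (h s) = of_int (c s) + (\<Sum>s'\<in>S. a s s' * series3 (h s'))" if "s \<in> S" for s
  proof (rule fps3_eqI)
    fix i j k
    have "a s s' * series3 (h s') = X1 * (of_int (A1 s s') * series3 (h s'))
      + X2 * (of_int (A2 s s') * series3 (h s')) + X3 * (of_int (A3 s s') * series3 (h s'))" for s'
      by (simp add: a_def algebra_simps)
    then show "coeff3 (series3 (h s)) i j k = coeff3 (of_int (c s) + (\<Sum>s'\<in>S. a s s' * series3 (h s'))) i j k"
      using h that unfolding linrec3_def
      by (simp add: coeff3_sum coeff3_X_mult coeff3_of_int_mult sum.distrib del: of_int_mult)
  qed
  moreover have "rational_fps3 (a s s') \<and> coeff3 (a s s') 0 0 0 = 0" for s s'
    unfolding a_def
    by (auto intro!: rational_fps3_add rational_fps3_mult rational_fps3_X rational_fps3_of_int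
        simp: coeff3_X_0_0_0 simp del: of_int_mult)
  ultimately show ?thesis
    using rational_fps3_linear_system[OF fin, of "\<lambda>s. series3 (h s)" "\<lambda>s. of_int (c s)" a]
      rational_fps3_of_int \<open>s \<in> S\<close> by blast
qed

section \<open>Recognizable functions of two variables\<close>

text \<open>\<open>h s (m, d)\<close> is the weighted number of paths from state \<open>s\<close> that read \<open>m\<close> letters of the
  first kind and \<open>d\<close> of the second and then stop with weight \<open>c\<close>; for the generating series
  this says \<open>H = c + x A H + y B H\<close>.\<close>

definition linrec2 :: "'s set \<Rightarrow> ('s \<Rightarrow> int) \<Rightarrow> ('s \<Rightarrow> 's \<Rightarrow> int) \<Rightarrow> ('s \<Rightarrow> 's \<Rightarrow> int)
    \<Rightarrow> ('s \<Rightarrow> nat \<times> nat \<Rightarrow> int) \<Rightarrow> bool" where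
  "linrec2 S c A B h \<longleftrightarrow> finite S \<and> (\<forall>s\<in>S. \<forall>m d. h s (m, d) =
      (if m = 0 \<and> d = 0 then c s else 0)
      + (if 0 < m then \<Sum>s'\<in>S. A s s' * h s' (m - 1, d) else 0)
      + (if 0 < d then \<Sum>s'\<in>S. B s s' * h s' (m, d - 1) else 0))"

text \<open>States are natural numbers only so that the state set can be quantified over; systems on
  any finite state set are transported by \<open>linrec2_recognizable\<close>.\<close>

definition recognizable2 :: "(nat \<times> nat \<Rightarrow> int) \<Rightarrow> bool" where
  "recognizable2 f \<longleftrightarrow> (\<exists>(S :: nat set) c A B h s. linrec2 S c A B h \<and> s \<in> S \<and> f = h s)"

lemma linrec2_eq:
  "linrec2 S c A B h \<Longrightarrow> s \<in> S \<Longrightarrow> h s (m, d) =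
      (if m = 0 \<and> d = 0 then c s else 0)
      + (if 0 < m then \<Sum>s'\<in>S. A s s' * h s' (m - 1, d) else 0)
      + (if 0 < d then \<Sum>s'\<in>S. B s s' * h s' (m, d - 1) else 0)"
  unfolding linrec2_def by blast

lemma linrec2_recognizable:
  assumes h: "linrec2 S c A B h" and "s \<in> S"
  shows "recognizable2 (h s)"
proof -
  obtain \<iota> :: "'a \<Rightarrow> nat" where "inj_on \<iota> S"
    using h finite_imp_inj_to_nat_seg unfolding linrec2_def by metis
  define \<kappa> where "\<kappa> = inv_into S \<iota>"
  have \<kappa>: "\<kappa> (\<iota> x) = x" if "x \<in> S" for x
    using \<open>inj_on \<iota> S\<close> that by (simp add: \<kappa>_def)
  have reindex: "(\<Sum>y\<in>\<iota> ` S. g (\<kappa> y)) = (\<Sum>x\<in>S. g x)" for g :: "'a \<Rightarrow> int"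
    using \<open>inj_on \<iota> S\<close> \<kappa> by (simp add: sum.reindex)
  have "linrec2 (\<iota> ` S) (\<lambda>x. c (\<kappa> x)) (\<lambda>x y. A (\<kappa> x) (\<kappa> y)) (\<lambda>x y. B (\<kappa> x) (\<kappa> y))
      (\<lambda>x. h (\<kappa> x))"
    unfolding linrec2_def
  proof (intro conjI ballI allI)
    show "finite (\<iota> ` S)"
      using h linrec2_def by blast
    fix x m d assume "x \<in> \<iota> ` S"
    then obtain t where t: "t \<in> S" and x: "x = \<iota> t" by blast
    show "h (\<kappa> x) (m, d) = (if m = 0 \<and> d = 0 then c (\<kappa> x) else 0)
      + (if 0 < m then \<Sum>y\<in>\<iota> ` S. A (\<kappa> x) (\<kappa> y) * h (\<kappa> y) (m - 1, d) else 0)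
      + (if 0 < d then \<Sum>y\<in>\<iota> ` S. B (\<kappa> x) (\<kappa> y) * h (\<kappa> y) (m, d - 1) else 0)"
      unfolding x \<kappa>[OF t] reindex[of "\<lambda>s'. A t s' * h s' (m - 1, d)"]
        reindex[of "\<lambda>s'. B t s' * h s' (m, d - 1)"]
      by (rule linrec2_eq[OF h t])
  qed
  then show ?thesis
    unfolding recognizable2_def using \<open>s \<in> S\<close> \<kappa> by (metis imageI)
qed

lemma sum_comp_card_fibres:
  fixes f :: "'s \<Rightarrow> 'a::comm_semiring_1"
  assumes "finite E" "finite S" "t ` E \<subseteq> S"
  shows "(\<Sum>e\<in>E. f (t e)) = (\<Sum>s\<in>S. of_nat (card {e\<in>E. t e = s}) * f s)"
proof -
  have "(\<Sum>e\<in>E. f (t e)) = (\<Sum>s\<in>S. \<Sum>e\<in>{e\<in>E. t e = s}. f (t e))"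
    using sum.group[OF assms, of "\<lambda>e. f (t e)"] by simp
  also have "\<dots> = (\<Sum>s\<in>S. of_nat (card {e\<in>E. t e = s}) * f s)"
    by (intro sum.cong) auto
  finally show ?thesis .
qed

lemma linrec2_edges:
  assumes S: "finite S"
    and edges: "\<And>s. s \<in> S \<Longrightarrow> finite (E s) \<and> t s ` E s \<subseteq> S \<and> finite (F s) \<and> u s ` F s \<subseteq> S"
    and h: "\<And>s m d. s \<in> S \<Longrightarrow> h s (m, d) = (if m = 0 \<and> d = 0 then c s else 0)
        + (if 0 < m then \<Sum>e\<in>E s. h (t s e) (m - 1, d) else 0)
        + (if 0 < d then \<Sum>e\<in>F s. h (u s e) (m, d - 1) else 0)"
  shows "linrec2 S c (\<lambda>s s'. int (card {e\<in>E s. t s e = s'}))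
    (\<lambda>s s'. int (card {e\<in>F s. u s e = s'})) h"
  unfolding linrec2_def
proof (intro conjI ballI allI)
  fix s m d assume s: "s \<in> S"
  show "h s (m, d) = (if m = 0 \<and> d = 0 then c s else 0)
    + (if 0 < m then \<Sum>s'\<in>S. int (card {e\<in>E s. t s e = s'}) * h s' (m - 1, d) else 0)
    + (if 0 < d then \<Sum>s'\<in>S. int (card {e\<in>F s. u s e = s'}) * h s' (m, d - 1) else 0)"
    unfolding h[OF s] using edges[OF s]
      sum_comp_card_fibres[OF _ S, of "E s" "t s" "\<lambda>s'. h s' (m - 1, d)"]
      sum_comp_card_fibres[OF _ S, of "F s" "u s" "\<lambda>s'. h s' (m, d - 1)"]
    by presburger
qed (rule S)

lemma recognizable2_new_state:
  assumes h: "linrec2 S c A B h"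
  shows "recognizable2 (\<lambda>(m, d). (if m = 0 \<and> d = 0 then c0 else 0)
      + (if 0 < m then \<Sum>s\<in>S. \<alpha> s * h s (m - 1, d) else 0)
      + (if 0 < d then \<Sum>s\<in>S. \<beta> s * h s (m, d - 1) else 0))" (is "recognizable2 ?f")
proof -
  let ?S = "insert None (Some ` S)"
  let ?row = "\<lambda>r M x y. case (x, y) of (None, Some s') \<Rightarrow> r s' | (Some s, Some s') \<Rightarrow> M s s' | _ \<Rightarrow> 0"
  have fin: "finite S"
    using h linrec2_def by blast
  have sum_S: "(\<Sum>y\<in>?S. ?row r M x y * g y) = (\<Sum>s'\<in>S. ?row r M x (Some s') * g (Some s'))"
    for r M x and g :: "'a option \<Rightarrow> int"
    using fin by (simp add: sum.reindex split: option.split)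
  have "linrec2 ?S (case_option c0 c) (?row \<alpha> A) (?row \<beta> B) (case_option ?f h)"
    unfolding linrec2_def
  proof (intro conjI ballI allI)
    show "finite ?S"
      using fin by simp
    fix x m d assume "x \<in> ?S"
    then show "case_option ?f h x (m, d) = (if m = 0 \<and> d = 0 then case_option c0 c x else 0)
      + (if 0 < m then \<Sum>y\<in>?S. ?row \<alpha> A x y * case_option ?f h y (m - 1, d) else 0)
      + (if 0 < d then \<Sum>y\<in>?S. ?row \<beta> B x y * case_option ?f h y (m, d - 1) else 0)"
      unfolding sum_S by (auto simp: linrec2_eq[OF h])
  qed
  then show ?thesis
    using linrec2_recognizable by fastforce
qed

lemma recognizable2_zero: "recognizable2 (\<lambda>_. 0)"
  using linrec2_recognizable[of "{()}" "\<lambda>_. 0" "\<lambda>_ _. 0" "\<lambda>_ _. 0" "\<lambda>_ _. 0" "()"]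
  by (simp add: linrec2_def)

lemma recognizable2_shift:
  assumes "recognizable2 f"
  shows "recognizable2 (\<lambda>(m, d). if 0 < m then f (m - 1, d) else 0)"
proof -
  obtain S :: "nat set" and c A B h s where h: "linrec2 S c A B h" "s \<in> S" "f = h s"
    using assms recognizable2_def by blast
  have "finite S"
    using h(1) linrec2_def by blast
  then show ?thesis
    using recognizable2_new_state[OF h(1), of 0 "\<lambda>s'. if s' = s then 1 else 0" "\<lambda>_. 0"] h(2)
    by (simp add: h(3) if_distrib[of "\<lambda>x. x * _"] cong: if_cong)
qed

lemma recognizable2_shift_by:
  assumes "recognizable2 f"
  shows "recognizable2 (\<lambda>(m, d). if j \<le> m then f (m - j, d) else 0)"
proof (induction j)
  case 0
  then show ?case
    using assms by simp
next
  case (Suc j)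
  have "(\<lambda>(m, d). if Suc j \<le> m then f (m - Suc j, d) else 0)
      = (\<lambda>(m, d). if 0 < m then (\<lambda>(m, d). if j \<le> m then f (m - j, d) else 0) (m - 1, d) else 0)"
    by (auto simp: fun_eq_iff)
  then show ?case
    using recognizable2_shift[OF Suc.IH] by simp
qed

lemma recognizable2_add:
  assumes "recognizable2 f" "recognizable2 g"
  shows "recognizable2 (\<lambda>x. f x + g x)"
proof -
  obtain S :: "nat set" and c A B h s where F: "linrec2 S c A B h" "s \<in> S" "f = h s"
    using assms(1) recognizable2_def by blast
  obtain S' :: "nat set" and c' A' B' h' s' where G: "linrec2 S' c' A' B' h'" "s' \<in> S'" "g = h' s'"
    using assms(2) recognizable2_def by blast
  let ?U = "S <+> S'"
  let ?blk = "\<lambda>M M' x y. case (x, y) of (Inl a, Inl b) \<Rightarrow> M a b | (Inr a, Inr b) \<Rightarrow> M' a b | _ \<Rightarrow> 0"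
  let ?row = "\<lambda>M M' y. case y of Inl b \<Rightarrow> M s b | Inr b \<Rightarrow> M' s' b"
  have fin: "finite S" "finite S'"
    using F(1) G(1) linrec2_def by blast+
  have split: "(\<Sum>y\<in>?U. k y) = (\<Sum>y\<in>S. k (Inl y)) + (\<Sum>y\<in>S'. k (Inr y))" for k :: "nat + nat \<Rightarrow> int"
    using fin by (simp add: sum.Plus comp_def)
  have U: "linrec2 ?U (case_sum c c') (?blk A A') (?blk B B') (case_sum h h')"
    unfolding linrec2_def
  proof (intro conjI ballI allI)
    show "finite ?U"
      using fin by simp
    fix x m d assume "x \<in> ?U"
    then show "case_sum h h' x (m, d) = (if m = 0 \<and> d = 0 then case_sum c c' x else 0)
      + (if 0 < m then \<Sum>y\<in>?U. ?blk A A' x y * case_sum h h' y (m - 1, d) else 0)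
      + (if 0 < d then \<Sum>y\<in>?U. ?blk B B' x y * case_sum h h' y (m, d - 1) else 0)"
      unfolding split by (auto simp: linrec2_eq[OF F(1)] linrec2_eq[OF G(1)])
  qed
  have eq: "(\<lambda>(m, d). (if m = 0 \<and> d = 0 then c s + c' s' else 0)
      + (if 0 < m then \<Sum>y\<in>?U. ?row A A' y * case_sum h h' y (m - 1, d) else 0)
      + (if 0 < d then \<Sum>y\<in>?U. ?row B B' y * case_sum h h' y (m, d - 1) else 0))
    = (\<lambda>x. f x + g x)"
  proof (intro ext, clarify)
    fix m d
    show "(if m = 0 \<and> d = 0 then c s + c' s' else 0)
      + (if 0 < m then \<Sum>y\<in>?U. ?row A A' y * case_sum h h' y (m - 1, d) else 0)
      + (if 0 < d then \<Sum>y\<in>?U. ?row B B' y * case_sum h h' y (m, d - 1) else 0)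
      = f (m, d) + g (m, d)"
      unfolding split F(3) G(3) linrec2_eq[OF F(1,2), of m d] linrec2_eq[OF G(1,2), of m d]
      by (simp add: algebra_simps)
  qed
  show ?thesis
    using recognizable2_new_state[OF U, of "c s + c' s'" "?row A A'" "?row B B'"] unfolding eq .
qed

lemma recognizable2_sum:
  "(\<And>i. i \<in> I \<Longrightarrow> recognizable2 (f i)) \<Longrightarrow> recognizable2 (\<lambda>x. \<Sum>i\<in>I. f i x)"
  by (induction I rule: infinite_finite_induct) (auto intro: recognizable2_add recognizable2_zero)

lemma sum_product_delta:
  fixes X :: "'a \<Rightarrow> 'c::semiring_0"
  assumes "finite S" "finite K" "k \<in> K"
  shows "(\<Sum>y\<in>S \<times> K. (if snd y = k then X (fst y) else 0) * g y) = (\<Sum>s\<in>S. X s * g (s, k))"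
proof -
  have "(\<Sum>y\<in>S \<times> K. G y) = (\<Sum>s\<in>S. \<Sum>k'\<in>K. G (s, k'))" for G :: "'a \<times> 'b \<Rightarrow> 'c"
    by (simp add: sum.cartesian_product)
  then show ?thesis
    using assms by (simp add: if_distrib[of "\<lambda>x. x * _"] cong: if_cong)
qed

text \<open>The second state component counts the first-kind letters read so far, saturating at \<open>M\<close>.\<close>

lemma recognizable2_restrict:
  assumes "recognizable2 f"
  shows "recognizable2 (\<lambda>(m, d). if M \<le> m then f (m, d) else 0)"
proof -
  obtain S :: "nat set" and c A B h s where h: "linrec2 S c A B h" "s \<in> S" "f = h s"
    using assms recognizable2_def by blast
  have fin: "finite S"
    using h(1) linrec2_def by blast
  let ?T = "S \<times> {0..M}"
  let ?c = "\<lambda>x. if M \<le> snd x then c (fst x) else 0"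
  let ?A = "\<lambda>x y. if snd y = min (snd x + 1) M then A (fst x) (fst y) else 0"
  let ?B = "\<lambda>x y. if snd y = snd x then B (fst x) (fst y) else 0"
  let ?h = "\<lambda>x (m, d). if M \<le> m + snd x then h (fst x) (m, d) else 0"
  have "linrec2 ?T ?c ?A ?B ?h"
    unfolding linrec2_def
  proof (intro conjI ballI allI)
    show "finite ?T"
      using fin by simp
    fix x m d assume "x \<in> ?T"
    then obtain t k where x: "x = (t, k)" and t: "t \<in> S" and k: "k \<le> M"
      by auto
    have sumA: "(\<Sum>y\<in>?T. ?A x y * ?h y (m - 1, d))
        = (\<Sum>s'\<in>S. A t s' * ?h (s', min (k + 1) M) (m - 1, d))"
      using sum_product_delta[OF fin finite_atLeastAtMost, of "min (k + 1) M" 0 M "A t"] k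
      unfolding x by (simp cong: if_cong)
    have sumB: "(\<Sum>y\<in>?T. ?B x y * ?h y (m, d - 1)) = (\<Sum>s'\<in>S. B t s' * ?h (s', k) (m, d - 1))"
      using sum_product_delta[OF fin finite_atLeastAtMost, of k 0 M "B t"] k
      unfolding x by (simp cong: if_cong)
    have shift: "(M \<le> m - 1 + min (k + 1) M) = (M \<le> m + k)" if "0 < m"
      using that by (auto simp: min_def)
    show "?h x (m, d) = (if m = 0 \<and> d = 0 then ?c x else 0)
      + (if 0 < m then \<Sum>y\<in>?T. ?A x y * ?h y (m - 1, d) else 0)
      + (if 0 < d then \<Sum>y\<in>?T. ?B x y * ?h y (m, d - 1) else 0)"
      unfolding sumA sumB using shift
      by (simp add: x linrec2_eq[OF h(1) t, of m d])
  qed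
  from linrec2_recognizable[OF this, of "(s, 0)"] show ?thesis
    using h(2,3) by (simp add: case_prod_unfold cong: if_cong)
qed

lemma sum_bool_product:
  "(\<Sum>y\<in>UNIV \<times> S \<times> R. F y) = (\<Sum>s\<in>S. \<Sum>r\<in>R. F (False, s, r) + F (True, s, r))"
proof -
  have "(\<Sum>y\<in>UNIV \<times> S \<times> R. F y) = (\<Sum>p\<in>UNIV. \<Sum>s\<in>S. \<Sum>r\<in>R. F (p, s, r))"
    by (simp add: sum.cartesian_product case_prod_unfold)
  then show ?thesis
    by (simp add: UNIV_bool sum.distrib)
qed

text \<open>A state \<open>(p, t, u)\<close> of the product system pairs states of the two factors; the flag
  \<open>p\<close> records that a letter of the second factor was read since the last joint step, after
  which letters of the first factor are forbidden.  Thus every word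
  \<open>u\<^sub>1 v\<^sub>1 \<gamma> \<dots> u\<^sub>d v\<^sub>d \<gamma> u\<^sub>d\<^sub>+\<^sub>1 v\<^sub>d\<^sub>+\<^sub>1\<close> of the Segre language is read in exactly one way.\<close>

definition segre_step1 :: "('a \<Rightarrow> 'a \<Rightarrow> int) \<Rightarrow> bool \<times> 'a \<times> 'b \<Rightarrow> bool \<times> 'a \<times> 'b \<Rightarrow> int" where
  "segre_step1 A = (\<lambda>(p, t, u) (p', t', u'). if \<not> p \<and> \<not> p' \<and> u' = u then A t t' else 0)"

definition segre_step2 :: "('b \<Rightarrow> 'b \<Rightarrow> int) \<Rightarrow> bool \<times> 'a \<times> 'b \<Rightarrow> bool \<times> 'a \<times> 'b \<Rightarrow> int" where
  "segre_step2 A = (\<lambda>(p, t, u) (p', t', u'). if p' \<and> t' = t then A u u' else 0)"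

definition segre_step3 :: "('a \<Rightarrow> 'a \<Rightarrow> int) \<Rightarrow> ('b \<Rightarrow> 'b \<Rightarrow> int)
    \<Rightarrow> bool \<times> 'a \<times> 'b \<Rightarrow> bool \<times> 'a \<times> 'b \<Rightarrow> int" where
  "segre_step3 B B' = (\<lambda>(p, t, u) (p', t', u'). if \<not> p' then B t t' * B' u u' else 0)"

lemma sum_segre_step1:
  assumes "finite S" "finite R" "u \<in> R"
  shows "(\<Sum>y\<in>UNIV \<times> S \<times> R. segre_step1 A (p, t, u) y * G y)
    = (if p then 0 else \<Sum>t'\<in>S. A t t' * G (False, t', u))"
  using assms by (simp add: sum_bool_product segre_step1_def if_distrib[of "\<lambda>x. x * _"]
      sum.delta' cong: if_cong)

lemma sum_segre_step2:
  assumes "finite S" "finite R" "t \<in> S"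
  shows "(\<Sum>y\<in>UNIV \<times> S \<times> R. segre_step2 A (p, t, u) y * G y) = (\<Sum>u'\<in>R. A u u' * G (True, t, u'))"
proof -
  have pull_if: "(\<Sum>r\<in>R. if t' = t then F r else 0) = (if t' = t then sum F R else 0)"
    for t' and F :: "'b \<Rightarrow> int"
    by simp
  show ?thesis
    using assms by (simp add: sum_bool_product segre_step2_def if_distrib[of "\<lambda>x. x * _"]
        pull_if sum.delta cong: if_cong)
qed

lemma sum_segre_step3:
  "(\<Sum>y\<in>UNIV \<times> S \<times> R. segre_step3 B B' (p, t, u) y * G y)
    = (\<Sum>t'\<in>S. \<Sum>u'\<in>R. B t t' * B' u u' * G (False, t', u'))"
  by (simp add: sum_bool_product segre_step3_def)

lemma linrec2_mult_expand:
  assumes "linrec2 R c A B h" "u \<in> R"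
  shows "((if i = 0 \<and> k = 0 then a else 0) + (if 0 < k then y else 0)) * h u (j, k)
    = (if i = 0 \<and> j = 0 \<and> k = 0 then a * c u else 0)
    + (if 0 < j then \<Sum>u'\<in>R. A u u' * (((if i = 0 \<and> k = 0 then a else 0) + (if 0 < k then y else 0))
        * h u' (j - 1, k)) else 0)
    + (if 0 < k then y * (\<Sum>u'\<in>R. B u u' * h u' (j, k - 1)) else 0)"
  unfolding linrec2_eq[OF assms, of j k]
  by (cases "k = 0") (auto simp: algebra_simps sum_distrib_left)

lemma recognizable2_segre_rational:
  assumes "recognizable2 f" "recognizable2 g"
  shows "rational_fps3 (series3 (\<lambda>(m, n, d). f (m, d) * g (n, d)))"
proof -
  obtain S :: "nat set" and cA AA BA hA s where A: "linrec2 S cA AA BA hA" "s \<in> S" "f = hA s"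
    using assms(1) recognizable2_def by blast
  obtain R :: "nat set" and cB AB BB hB r where B: "linrec2 R cB AB BB hB" "r \<in> R" "g = hB r"
    using assms(2) recognizable2_def by blast
  have fin: "finite S" "finite R"
    using A(1) B(1) linrec2_def by blast+
  define hA' where "hA' t i k = (if i = 0 \<and> k = 0 then cA t else 0)
    + (if 0 < k then \<Sum>t'\<in>S. BA t t' * hA t' (i, k - 1) else 0)" for t i k
  define G where "G = (\<lambda>(p, t, u) (i, j, k). (if p then hA' t i k else hA t (i, k)) * hB u (j, k))"
  let ?U = "(UNIV :: bool set) \<times> S \<times> R"
  have "linrec3 ?U (\<lambda>(p, t, u). cA t * cB u) (segre_step1 AA) (segre_step2 AB) (segre_step3 BA BB) G"
    unfolding linrec3_def
  proof (intro conjI ballI allI)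
    show "finite ?U"
      using fin by simp
    fix x i j k assume "x \<in> ?U"
    then obtain p t u where x: "x = (p, t, u)" and t: "t \<in> S" and u: "u \<in> R"
      by auto
    have hA: "hA t (i, k) = hA' t i k + (if 0 < i then \<Sum>t'\<in>S. AA t t' * hA t' (i - 1, k) else 0)"
      unfolding hA'_def linrec2_eq[OF A(1) t, of i k] by simp
    have hA'_hB: "hA' t i k * hB u (j, k) = (if i = 0 \<and> j = 0 \<and> k = 0 then cA t * cB u else 0)
      + (if 0 < j then \<Sum>u'\<in>R. AB u u' * (hA' t i k * hB u' (j - 1, k)) else 0)
      + (if 0 < k then (\<Sum>t'\<in>S. BA t t' * hA t' (i, k - 1)) * (\<Sum>u'\<in>R. BB u u' * hB u' (j, k - 1))
         else 0)"
      unfolding hA'_def by (rule linrec2_mult_expand[OF B(1) u])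
    have joint: "(\<Sum>t'\<in>S. \<Sum>u'\<in>R. BA t t' * BB u u' * G (False, t', u') (i, j, k - 1))
        = (\<Sum>t'\<in>S. BA t t' * hA t' (i, k - 1)) * (\<Sum>u'\<in>R. BB u u' * hB u' (j, k - 1))"
      by (simp add: G_def sum_product mult_ac)
    show "G x (i, j, k) = (if i = 0 \<and> j = 0 \<and> k = 0 then (\<lambda>(p, t, u). cA t * cB u) x else 0)
      + (if 0 < i then \<Sum>y\<in>?U. segre_step1 AA x y * G y (i - 1, j, k) else 0)
      + (if 0 < j then \<Sum>y\<in>?U. segre_step2 AB x y * G y (i, j - 1, k) else 0)
      + (if 0 < k then \<Sum>y\<in>?U. segre_step3 BA BB x y * G y (i, j, k - 1) else 0)"
      unfolding x sum_segre_step1[OF fin u] sum_segre_step2[OF fin t] sum_segre_step3 joint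
      by (cases p) (simp_all add: G_def hA hA'_hB algebra_simps sum_distrib_left)
  qed
  from linrec3_rational[OF this, of "(False, s, r)"] show ?thesis
    using A(2,3) B(2,3) by (simp add: G_def)
qed

section \<open>Word counts of regular languages\<close>

definition accepted_words :: "nat \<Rightarrow> nat \<Rightarrow> (nat \<Rightarrow> nat + nat \<Rightarrow> nat) \<Rightarrow> nat set \<Rightarrow> nat
    \<Rightarrow> nat \<Rightarrow> nat \<Rightarrow> (nat + nat) list set" where
  "accepted_words a p \<delta> F q m d = {w \<in> lists (sigma a p). foldl \<delta> q w \<in> F \<and>
      length (filter isl w) = m \<and> length (filter (\<lambda>x. \<not> isl x) w) = d}"

lemma finite_accepted_words: "finite (accepted_words a p \<delta> F q m d)"
proof -
  have "accepted_words a p \<delta> F q m d \<subseteq> {w. set w \<subseteq> sigma a p \<and> length w = m + d}"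
    by (auto simp: accepted_words_def sum_length_filter_compl)
  moreover have "finite (sigma a p)"
    by (simp add: sigma_def)
  ultimately show ?thesis
    using finite_lists_length_eq finite_subset by blast
qed

lemma card_accepted_words:
  "card (accepted_words a p \<delta> F q m d) = (if m = 0 \<and> d = 0 \<and> q \<in> F then 1 else 0)
     + (if 0 < m then \<Sum>i\<in>{1..a}. card (accepted_words a p \<delta> F (\<delta> q (Inl i)) (m - 1) d) else 0)
     + (if 0 < d then \<Sum>i\<in>{1..p}. card (accepted_words a p \<delta> F (\<delta> q (Inr i)) m (d - 1)) else 0)"
proof -
  let ?W = "accepted_words a p \<delta> F q m d"
  let ?tail = "\<lambda>x. {w. x # w \<in> ?W}"
  define W0 where "W0 = ?W \<inter> {[]}"
  define W1 where "W1 = (\<Union>i\<in>{1..a}. (#) (Inl i) ` ?tail (Inl i))"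
  define W2 where "W2 = (\<Union>i\<in>{1..p}. (#) (Inr i) ` ?tail (Inr i))"
  have W: "?W = W0 \<union> W1 \<union> W2"
  proof (intro equalityI subsetI)
    fix w assume w: "w \<in> ?W"
    show "w \<in> W0 \<union> W1 \<union> W2"
    proof (cases w)
      case Nil
      then show ?thesis using w by (simp add: W0_def)
    next
      case (Cons x w')
      have "x \<in> sigma a p"
        using w Cons by (simp add: accepted_words_def)
      then show ?thesis
        using w Cons unfolding sigma_def W1_def W2_def by auto
    qed
  qed (auto simp: W0_def W1_def W2_def)
  have fin_tail: "finite (?tail x)" for x
    using finite_vimageI[OF finite_accepted_words, of "(#) x"] by (simp add: vimage_def)
  have fin: "finite W0" "finite W1" "finite W2"
    using W finite_accepted_words[of a p \<delta> F q m d] by (metis finite_Un)+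
  have "card ?W = card W0 + card W1 + card W2"
    unfolding W using fin
    by (subst card_Un_disjoint; (auto simp: W0_def W1_def W2_def)?)+
  also have "card W0 = (if m = 0 \<and> d = 0 \<and> q \<in> F then 1 else 0)"
    by (auto simp: W0_def accepted_words_def)
  also have "card W1 = (\<Sum>i\<in>{1..a}. card (?tail (Inl i)))"
    unfolding W1_def by (subst card_UN_disjoint) (auto simp: fin_tail card_image)
  also have "\<dots> = (if 0 < m then \<Sum>i\<in>{1..a}. card (accepted_words a p \<delta> F (\<delta> q (Inl i)) (m - 1) d) else 0)"
    by (auto simp: accepted_words_def sigma_def intro!: sum.neutral sum.cong arg_cong[where f = card])
  also have "card W2 = (\<Sum>i\<in>{1..p}. card (?tail (Inr i)))"
    unfolding W2_def by (subst card_UN_disjoint) (auto simp: fin_tail card_image)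
  also have "\<dots> = (if 0 < d then \<Sum>i\<in>{1..p}. card (accepted_words a p \<delta> F (\<delta> q (Inr i)) m (d - 1)) else 0)"
    by (auto simp: accepted_words_def sigma_def intro!: sum.neutral sum.cong arg_cong[where f = card])
  finally show ?thesis .
qed

lemma recognizable2_regular_count:
  assumes "regular (sigma a p) L"
  shows "recognizable2 (\<lambda>(m, d). int (card (count_lang L m d)))"
proof -
  obtain Q :: "nat set" and q0 \<delta> F where Q: "finite Q" "q0 \<in> Q" "\<forall>q\<in>Q. \<forall>x\<in>sigma a p. \<delta> q x \<in> Q"
    and L: "L = {w \<in> lists (sigma a p). foldl \<delta> q0 w \<in> F}"
    using assms unfolding regular_def by blast
  let ?h = "\<lambda>q (m, d). int (card (accepted_words a p \<delta> F q m d))"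
  have into_Q: "(\<lambda>i. \<delta> q (Inl i)) ` {1..a} \<subseteq> Q" "(\<lambda>i. \<delta> q (Inr i)) ` {1..p} \<subseteq> Q" if "q \<in> Q" for q
    using Q(3) that by (auto simp: sigma_def)
  have "linrec2 Q (\<lambda>q. if q \<in> F then 1 else 0)
      (\<lambda>q q'. int (card {i\<in>{1..a}. \<delta> q (Inl i) = q'}))
      (\<lambda>q q'. int (card {i\<in>{1..p}. \<delta> q (Inr i) = q'})) ?h"
    using Q(1) into_Q by (intro linrec2_edges) (auto simp: of_nat_sum card_accepted_words[of a p \<delta> F])
  moreover have "count_lang L m d = accepted_words a p \<delta> F q0 m d" for m d
    unfolding L count_lang_def accepted_words_def by auto
  ultimately show ?thesis
    using linrec2_recognizable[of Q _ _ _ ?h q0] Q(2) by simp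
qed

section \<open>Hilbert functions of monomial algebras\<close>

definition mon_of :: "monomial list \<Rightarrow> nat multiset \<Rightarrow> monomial" where
  "mon_of gs M = (\<Sum>l\<in>#M. gs ! l)"

lemma mon_of_empty [simp]: "mon_of gs {#} = 0"
  by (simp add: mon_of_def)

lemma mon_of_add_mset [simp]: "mon_of gs (add_mset l M) = gs ! l + mon_of gs M"
  by (simp add: mon_of_def)

lemma mon_of_union: "mon_of gs (M + N) = mon_of gs M + mon_of gs N"
  by (simp add: mon_of_def)

lemma multisets_of_size_Suc:
  "multisets_of_size A (Suc d) = {add_mset l M | l M. l \<in> A \<and> M \<in> multisets_of_size A d}"
proof (intro equalityI subsetI)
  fix M assume M: "M \<in> multisets_of_size A (Suc d)"
  then have "M \<noteq> {#}"
    by (auto simp: multisets_of_size_def)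
  then obtain l where l: "l \<in># M"
    by (meson multiset_nonemptyE)
  have "M - {#l#} \<in> multisets_of_size A d"
    using M l by (auto simp: multisets_of_size_def size_Diff_singleton dest: in_diffD)
  moreover have "l \<in> A"
    using M l by (auto simp: multisets_of_size_def)
  moreover have "M = add_mset l (M - {#l#})"
    using l by simp
  ultimately show "M \<in> {add_mset l M | l M. l \<in> A \<and> M \<in> multisets_of_size A d}"
    by blast
qed (auto simp: multisets_of_size_def)

lemma mon_pow_eq_image: "mon_pow (set gs) d = mon_of gs ` multisets_of_size {..<length gs} d"
proof (induction d)
  case 0
  then show ?case
    by simp
next
  case (Suc d)
  have "mon_pow (set gs) (Suc d) = (\<Union>l<length gs. (+) (gs ! l) ` mon_pow (set gs) d)"
    by (auto simp: in_set_conv_nth)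
  also have "\<dots> = (\<Union>l<length gs. mon_of gs ` add_mset l ` multisets_of_size {..<length gs} d)"
    by (simp add: Suc image_image)
  also have "\<dots> = mon_of gs ` multisets_of_size {..<length gs} (Suc d)"
    unfolding multisets_of_size_Suc by blast
  finally show ?case .
qed

text \<open>A product of generators has many representations \<open>mon_of gs M\<close>; the least one in the
  (total, well-founded) multiset order is its normal form, and the other ones are nonstandard.\<close>

definition nonstandard :: "monomial list \<Rightarrow> nat multiset set" where
  "nonstandard gs = {M. set_mset M \<subseteq> {..<length gs} \<and> (\<exists>M'. set_mset M' \<subseteq> {..<length gs}
     \<and> size M' = size M \<and> M' < M \<and> mon_of gs M' = mon_of gs M)}"

lemma card_mon_pow_standard:
  "card (mon_pow (set gs) d) = card (multisets_of_size {..<length gs} d - nonstandard gs)"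
proof -
  let ?Md = "multisets_of_size {..<length gs} d"
  have "bij_betw (mon_of gs) (?Md - nonstandard gs) (mon_pow (set gs) d)"
    unfolding bij_betw_def
  proof
    show "inj_on (mon_of gs) (?Md - nonstandard gs)"
    proof (rule inj_onI, rule ccontr)
      fix M N assume M: "M \<in> ?Md - nonstandard gs" and N: "N \<in> ?Md - nonstandard gs"
        and eq: "mon_of gs M = mon_of gs N" and "M \<noteq> N"
      then consider "M < N" | "N < M"
        by fastforce
      then show False
        using M N eq by cases (auto simp: nonstandard_def multisets_of_size_def)
    qed
    show "mon_of gs ` (?Md - nonstandard gs) = mon_pow (set gs) d"
    proof (intro equalityI subsetI)
      fix u assume "u \<in> mon_pow (set gs) d"
      then have ex: "\<exists>M. M \<in> ?Md \<and> mon_of gs M = u"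
        by (auto simp: mon_pow_eq_image)
      define M where "M = (LEAST M. M \<in> ?Md \<and> mon_of gs M = u)"
      have M: "M \<in> ?Md" "mon_of gs M = u"
        using LeastI_ex[OF ex] unfolding M_def by blast+
      have "M \<notin> nonstandard gs"
      proof
        assume "M \<in> nonstandard gs"
        then obtain M' where "set_mset M' \<subseteq> {..<length gs}" "size M' = size M" "M' < M"
            "mon_of gs M' = mon_of gs M"
          unfolding nonstandard_def by blast
        then show False
          using M not_less_Least[of M' "\<lambda>M. M \<in> ?Md \<and> mon_of gs M = u"]
          unfolding M_def multisets_of_size_def by auto
      qed
      then show "u \<in> mon_of gs ` (?Md - nonstandard gs)"
        using M by blast
    qed (auto simp: mon_pow_eq_image)
  qed
  then show ?thesis
    by (simp add: bij_betw_same_card)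
qed

lemma nonstandard_add:
  assumes "M \<in> nonstandard gs" "set_mset N \<subseteq> {..<length gs}"
  shows "M + N \<in> nonstandard gs"
proof -
  obtain M' where M': "set_mset M' \<subseteq> {..<length gs}" "size M' = size M" "M' < M"
      "mon_of gs M' = mon_of gs M"
    using assms(1) unfolding nonstandard_def by blast
  have "M' + N < M + N"
    using M'(3) by (rule add_strict_right_mono)
  then show ?thesis
    using assms M' unfolding nonstandard_def by (auto simp: mon_of_union intro!: exI[of _ "M' + N"])
qed

lemma nat_seq_mono_subseq:
  "\<exists>\<sigma>. strict_mono \<sigma> \<and> (\<forall>n. (x :: nat \<Rightarrow> nat) (\<sigma> n) \<le> x (\<sigma> (Suc n)))"
proof -
  obtain f where f: "strict_mono f" and "monoseq (\<lambda>n. x (f n))"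
    using seq_monosub[of x] by blast
  then consider "\<forall>n. x (f n) \<le> x (f (Suc n))" | "\<forall>n. x (f (Suc n)) \<le> x (f n)"
    by (auto simp: monoseq_Suc)
  then show ?thesis
  proof cases
    case 1
    with f show ?thesis by blast
  next
    case 2
    obtain N where N: "\<And>n. x (f N) \<le> x (f n)"
      using ex_has_least_nat[of "\<lambda>_. True" 0 "\<lambda>n. x (f n)"] by auto
    have const: "x (f n) = x (f N)" if "N \<le> n" for n
      using lift_Suc_antimono_le[of "\<lambda>n. x (f n)", OF _ that] 2 N[of n] by auto
    have "strict_mono (\<lambda>n. f (N + n))"
      using f by (simp add: strict_mono_def)
    moreover have "x (f (N + n)) \<le> x (f (N + Suc n))" for n
      using const[of "N + n"] const[of "N + Suc n"] by simp
    ultimately show ?thesis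
      by blast
  qed
qed

lemma dickson_subseq:
  fixes x :: "nat \<Rightarrow> 'a \<Rightarrow> nat"
  assumes "finite A"
  shows "\<exists>\<sigma>. strict_mono \<sigma> \<and> (\<forall>l\<in>A. \<forall>n. x (\<sigma> n) l \<le> x (\<sigma> (Suc n)) l)"
  using assms
proof (induction A rule: finite_induct)
  case empty
  have "strict_mono (id :: nat \<Rightarrow> nat)"
    by (simp add: strict_mono_def)
  then show ?case
    by blast
next
  case (insert a A)
  then obtain \<sigma> where \<sigma>: "strict_mono \<sigma>" "\<forall>l\<in>A. \<forall>n. x (\<sigma> n) l \<le> x (\<sigma> (Suc n)) l"
    by blast
  obtain \<tau> where \<tau>: "strict_mono \<tau>" "\<forall>n. x (\<sigma> (\<tau> n)) a \<le> x (\<sigma> (\<tau> (Suc n))) a"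
    using nat_seq_mono_subseq[of "\<lambda>n. x (\<sigma> n) a"] by blast
  have "x (\<sigma> (\<tau> n)) l \<le> x (\<sigma> (\<tau> (Suc n))) l" if "l \<in> A" for l n
    using lift_Suc_mono_le[of "\<lambda>m. x (\<sigma> m) l"] \<sigma>(2) that \<tau>(1)
    by (simp add: strict_mono_less_eq)
  then have "\<forall>l\<in>insert a A. \<forall>n. x ((\<sigma> \<circ> \<tau>) n) l \<le> x ((\<sigma> \<circ> \<tau>) (Suc n)) l"
    using \<tau>(2) by auto
  moreover have "strict_mono (\<sigma> \<circ> \<tau>)"
    using \<sigma>(1) \<tau>(1) by (rule strict_mono_o)
  ultimately show ?case
    by blast
qed

lemma finite_subset_mset_antichain:
  assumes "finite A" "\<forall>M\<in>U. set_mset M \<subseteq> A" "\<forall>M\<in>U. \<forall>N\<in>U. M \<subseteq># N \<longrightarrow> M = N"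
  shows "finite U"
proof (rule ccontr)
  assume "infinite U"
  then obtain f :: "nat \<Rightarrow> 'a multiset" where f: "inj f" "range f \<subseteq> U"
    using infinite_countable_subset by blast
  obtain \<sigma> where \<sigma>: "strict_mono \<sigma>" "\<forall>l\<in>A. \<forall>n. count (f (\<sigma> n)) l \<le> count (f (\<sigma> (Suc n))) l"
    using dickson_subseq[OF assms(1), of "\<lambda>n. count (f n)"] by blast
  have U: "f (\<sigma> 0) \<in> U" "f (\<sigma> 1) \<in> U"
    using f(2) by auto
  have "f (\<sigma> 0) \<subseteq># f (\<sigma> 1)"
    unfolding subseteq_mset_def
  proof
    fix l
    show "count (f (\<sigma> 0)) l \<le> count (f (\<sigma> 1)) l"
    proof (cases "l \<in> A")
      case True
      then show ?thesis
        using \<sigma>(2) by (metis One_nat_def)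
    next
      case False
      then have "l \<notin># f (\<sigma> 0)"
        using U assms(2) by blast
      then show ?thesis
        by (simp add: not_in_iff)
    qed
  qed
  then have "f (\<sigma> 0) = f (\<sigma> 1)"
    using assms(3) U by blast
  then have "\<sigma> 0 = \<sigma> 1"
    using f(1) by (simp add: inj_eq)
  then show False
    using \<sigma>(1) by (simp add: strict_mono_eq)
qed

lemma subset_mset_minimal_below:
  assumes "M \<in> U"
  obtains B where "B \<in> U" "B \<subseteq># M" "\<forall>N\<in>U. N \<subseteq># B \<longrightarrow> N = B"
proof -
  obtain B where B: "B \<in> {N \<in> U. N \<subseteq># M}" and min: "\<And>N. (N, B) \<in> {(N, B). N \<subset># B} \<Longrightarrow> N \<notin> {N \<in> U. N \<subseteq># M}"
    using wfE_min[OF wf_subset_mset_rel, of M "{N \<in> U. N \<subseteq># M}"] assms by blast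
  have "N = B" if "N \<in> U" "N \<subseteq># B" for N
    using min[of N] that B subset_mset.order_trans[of N B M] by (auto simp: subset_mset.less_le)
  then show ?thesis
    using that B by blast
qed

definition avoiding :: "nat \<Rightarrow> nat multiset set \<Rightarrow> nat \<Rightarrow> nat multiset \<Rightarrow> nat \<Rightarrow> nat multiset set" where
  "avoiding k B i V d = {C \<in> multisets_of_size {i..<k} d. \<forall>b\<in>B. \<not> b \<subseteq># V + C}"

lemma avoiding_0: "avoiding k B i V 0 = (if \<exists>b\<in>B. b \<subseteq># V then {} else {{#}})"
  by (auto simp: avoiding_def)

lemma avoiding_Suc:
  "avoiding k B i V (Suc d) = (\<Union>j\<in>{i..<k}. add_mset j ` avoiding k B j (add_mset j V) d)"
proof (intro equalityI subsetI)
  fix C assume C: "C \<in> avoiding k B i V (Suc d)"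
  then have "C \<noteq> {#}"
    by (auto simp: avoiding_def multisets_of_size_def)
  define j where "j = Min (set_mset C)"
  have j: "j \<in># C" "\<forall>l\<in>#C. j \<le> l"
    using \<open>C \<noteq> {#}\<close> by (simp_all add: j_def)
  have "set_mset (C - {#j#}) \<subseteq> set_mset C"
    by (meson in_diffD subsetI)
  then have "C - {#j#} \<in> avoiding k B j (add_mset j V) d"
    using C j by (fastforce simp: avoiding_def multisets_of_size_def size_Diff_singleton)
  moreover have "j \<in> {i..<k}"
    using C j by (auto simp: avoiding_def multisets_of_size_def)
  moreover have "C = add_mset j (C - {#j#})"
    using j by simp
  ultimately show "C \<in> (\<Union>j\<in>{i..<k}. add_mset j ` avoiding k B j (add_mset j V) d)"
    by blast
qed (auto simp: avoiding_def multisets_of_size_def)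

lemma finite_avoiding: "finite (avoiding k B i V d)"
  unfolding avoiding_def by (rule finite_subset[OF _ finite_multisets_of_size[of "{i..<k}" d]]) auto

lemma card_avoiding_Suc:
  "card (avoiding k B i V (Suc d)) = (\<Sum>j\<in>{i..<k}. card (avoiding k B j (add_mset j V) d))"
proof -
  let ?A = "\<lambda>j. add_mset j ` avoiding k B j (add_mset j V) d"
  have Min: "Min (set_mset (add_mset j C)) = j" if "C \<in> avoiding k B j (add_mset j V) d" for j C
    using that by (intro Min_eqI) (auto simp: avoiding_def multisets_of_size_def)
  have "?A j1 \<inter> ?A j2 = {}" if "j1 \<noteq> j2" for j1 j2
  proof (rule equals0I)
    fix C assume "C \<in> ?A j1 \<inter> ?A j2"
    then obtain C1 C2 where "C = add_mset j1 C1" "C1 \<in> avoiding k B j1 (add_mset j1 V) d"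
      "C = add_mset j2 C2" "C2 \<in> avoiding k B j2 (add_mset j2 V) d"
      by blast
    then show False
      using Min[of C1 j1] Min[of C2 j2] that by simp
  qed
  then have "card (\<Union>j\<in>{i..<k}. ?A j) = (\<Sum>j\<in>{i..<k}. card (?A j))"
    by (intro card_UN_disjoint) (auto simp: finite_avoiding)
  also have "\<dots> = (\<Sum>j\<in>{i..<k}. card (avoiding k B j (add_mset j V) d))"
    by (intro sum.cong refl card_image) (simp add: inj_on_def)
  finally show ?thesis
    unfolding avoiding_Suc .
qed

lemma avoiding_inter:
  assumes "\<forall>b\<in>B. b \<subseteq># K"
  shows "avoiding k B i (V \<inter># K) d = avoiding k B i V d"
proof -
  have "b \<subseteq># (V \<inter># K) + C \<longleftrightarrow> b \<subseteq># V + C" if "b \<subseteq># K" for b C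
  proof
    assume "b \<subseteq># (V \<inter># K) + C"
    then show "b \<subseteq># V + C"
      by (meson subset_mset.add_right_mono subset_mset.inf_le1 subset_mset.order_trans)
  next
    assume "b \<subseteq># V + C"
    show "b \<subseteq># (V \<inter># K) + C"
      unfolding subseteq_mset_def
    proof
      fix a
      have "count b a \<le> count V a + count C a" "count b a \<le> count K a"
        using \<open>b \<subseteq># V + C\<close> \<open>b \<subseteq># K\<close> by (auto simp: subseteq_mset_def)
      then show "count b a \<le> count ((V \<inter># K) + C) a"
        by (simp add: min_def)
    qed
  qed
  then show ?thesis
    using assms unfolding avoiding_def by blast
qed

lemma finite_subset_mset_of: "finite {V. V \<subseteq># K}"
proof (rule finite_subset)
  show "{V. V \<subseteq># K} \<subseteq> (\<Union>n\<le>size K. multisets_of_size (set_mset K) n)"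
    by (auto simp: multisets_of_size_def dest: mset_subset_eqD size_mset_mono)
qed auto

text \<open>Automaton reading the entries of \<open>C\<close> in increasing order; the state records the
  smallest allowed next entry and the part of \<open>V + C\<close> read so far, truncated at \<open>K\<close>,
  which is all that matters for divisibility by an element of \<open>B\<close>.\<close>

lemma recognizable2_avoiding:
  assumes "finite B"
  shows "recognizable2 (\<lambda>(m, d). if m = 0 then int (card (avoiding k B 0 {#} d)) else 0)"
proof -
  define K where "K = (\<Sum>b\<in>B. b)"
  have BK: "\<forall>b\<in>B. b \<subseteq># K"
    using assms by (auto simp: K_def sum.remove intro: mset_subset_eq_add_left)
  let ?S = "{0..k} \<times> {V. V \<subseteq># K}"
  let ?h = "\<lambda>(i, V) (m, d). if m = 0 then int (card (avoiding k B i V d)) else 0"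
  have "linrec2 ?S (\<lambda>(i, V). if \<exists>b\<in>B. b \<subseteq># V then 0 else 1)
      (\<lambda>x y. int (card {e \<in> {} :: nat set. x = y}))
      (\<lambda>x y. int (card {j \<in> {fst x..<k}. (j, add_mset j (snd x) \<inter># K) = y})) ?h"
  proof (rule linrec2_edges[where E = "\<lambda>_. {}" and t = "\<lambda>x _. x" and F = "\<lambda>x. {fst x..<k}"
        and u = "\<lambda>x j. (j, add_mset j (snd x) \<inter># K)"])
    show "finite ?S"
      using finite_subset_mset_of by blast
    fix x assume "x \<in> ?S"
    then show "finite ({} :: nat set) \<and> (\<lambda>_. x) ` ({} :: nat set) \<subseteq> ?S \<and> finite {fst x..<k}
        \<and> (\<lambda>j. (j, add_mset j (snd x) \<inter># K)) ` {fst x..<k} \<subseteq> ?S"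
      by auto
  next
    fix x m d assume "x \<in> ?S"
    then obtain i V where x: "x = (i, V)"
      by fastforce
    show "?h x (m, d) = (if m = 0 \<and> d = 0 then (\<lambda>(i, V). if \<exists>b\<in>B. b \<subseteq># V then 0 else 1) x else 0)
        + (if 0 < m then \<Sum>e\<in>({} :: nat set). ?h x (m - 1, d) else 0)
        + (if 0 < d then \<Sum>j\<in>{fst x..<k}. ?h (j, add_mset j (snd x) \<inter># K) (m, d - 1) else 0)"
    proof (cases "m = 0 \<and> 0 < d")
      case True
      then obtain d' where "d = Suc d'"
        using gr0_conv_Suc by blast
      then show ?thesis
        using True by (simp add: x card_avoiding_Suc avoiding_inter[OF BK] of_nat_sum)
    qed (auto simp: x avoiding_0)
  qed
  from linrec2_recognizable[OF this, of "(0, {#})"] show ?thesis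
    by simp
qed

lemma recognizable2_mon_pow:
  assumes "finite G"
  shows "recognizable2 (\<lambda>(m, d). if m = 0 then int (card (mon_pow G d)) else 0)"
proof -
  obtain gs where gs: "set gs = G"
    using assms finite_list by blast
  let ?k = "length gs"
  define B where "B = {M \<in> nonstandard gs. \<forall>N\<in>nonstandard gs. N \<subseteq># M \<longrightarrow> N = M}"
  have "finite B"
    by (rule finite_subset_mset_antichain[of "{..<?k}"]) (auto simp: B_def nonstandard_def)
  have standard: "multisets_of_size {..<?k} d - nonstandard gs = avoiding ?k B 0 {#} d" for d
  proof (intro equalityI subsetI)
    fix C assume C: "C \<in> multisets_of_size {..<?k} d - nonstandard gs"
    have "\<not> b \<subseteq># C" if "b \<in> B" for b
    proof
      assume "b \<subseteq># C"
      have "set_mset (C - b) \<subseteq> {..<?k}"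
        using C by (auto simp: multisets_of_size_def dest: in_diffD)
      then have "b + (C - b) \<in> nonstandard gs"
        using that by (intro nonstandard_add) (auto simp: B_def)
      then show False
        using C \<open>b \<subseteq># C\<close> by (simp add: subset_mset.add_diff_inverse)
    qed
    then show "C \<in> avoiding ?k B 0 {#} d"
      using C by (auto simp: avoiding_def atLeast0LessThan)
  next
    fix C assume C: "C \<in> avoiding ?k B 0 {#} d"
    have "C \<notin> nonstandard gs"
    proof
      assume "C \<in> nonstandard gs"
      then obtain b where "b \<in> nonstandard gs" "b \<subseteq># C" "\<forall>N\<in>nonstandard gs. N \<subseteq># b \<longrightarrow> N = b"
        by (rule subset_mset_minimal_below)
      then show False
        using C by (auto simp: avoiding_def B_def)
    qed
    then show "C \<in> multisets_of_size {..<?k} d - nonstandard gs"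
      using C by (auto simp: avoiding_def atLeast0LessThan)
  qed
  show ?thesis
    using recognizable2_avoiding[OF \<open>finite B\<close>, of ?k]
    by (simp add: gs[symmetric] card_mon_pow_standard standard cong: if_cong)
qed

section \<open>Segre products\<close>

lemma mon_pow_segre_gens:
  "mon_pow (segre_gens GA GB) d = {u + v | u v. u \<in> mon_pow GA d \<and> v \<in> mon_pow GB d}"
proof (induction d)
  case 0
  then show ?case by simp
next
  case (Suc d)
  show ?case
  proof (intro equalityI subsetI)
    fix x assume "x \<in> mon_pow (segre_gens GA GB) (Suc d)"
    then obtain g w where x: "x = g + w" and g: "g \<in> segre_gens GA GB"
        and "w \<in> mon_pow (segre_gens GA GB) d"
      by auto
    then obtain u v where "w = u + v" "u \<in> mon_pow GA d" "v \<in> mon_pow GB d"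
      unfolding Suc.IH by blast
    moreover obtain a b where "g = a + b" "a \<in> GA" "b \<in> GB"
      using g unfolding segre_gens_def by blast
    ultimately obtain a b u v where "x = (a + b) + (u + v)" "a \<in> GA" "b \<in> GB"
        "u \<in> mon_pow GA d" "v \<in> mon_pow GB d"
      using x by blast
    then have "x = (a + u) + (b + v)" "a + u \<in> mon_pow GA (Suc d)" "b + v \<in> mon_pow GB (Suc d)"
      by (auto simp: algebra_simps)
    then show "x \<in> {u + v | u v. u \<in> mon_pow GA (Suc d) \<and> v \<in> mon_pow GB (Suc d)}"
      by blast
  next
    fix x assume "x \<in> {u + v | u v. u \<in> mon_pow GA (Suc d) \<and> v \<in> mon_pow GB (Suc d)}"
    then obtain a b u v where "x = (a + u) + (b + v)" "a \<in> GA" "b \<in> GB"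
        "u \<in> mon_pow GA d" "v \<in> mon_pow GB d"
      by auto
    moreover have "u + v \<in> mon_pow (segre_gens GA GB) d"
      unfolding Suc.IH using \<open>u \<in> mon_pow GA d\<close> \<open>v \<in> mon_pow GB d\<close> by blast
    moreover have "a + b \<in> segre_gens GA GB"
      unfolding segre_gens_def using \<open>a \<in> GA\<close> \<open>b \<in> GB\<close> by blast
    ultimately have "x = (a + b) + (u + v)" "a + b \<in> segre_gens GA GB"
        "u + v \<in> mon_pow (segre_gens GA GB) d"
      by (simp_all add: algebra_simps)
    then show "x \<in> mon_pow (segre_gens GA GB) (Suc d)"
      by auto
  qed
qed

lemma keys_mon_pow:
  assumes "\<forall>g\<in>G. Poly_Mapping.keys g \<subseteq> V" "u \<in> mon_pow G d"
  shows "Poly_Mapping.keys u \<subseteq> V"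
  using assms(2)
proof (induction d arbitrary: u)
  case (Suc d)
  then obtain g w where "u = g + w" "g \<in> G" "w \<in> mon_pow G d"
    by auto
  then show ?case
    using Suc.IH assms(1) keys_add[of g w] by blast
qed simp

lemma add_eq_add_disjoint_keys:
  fixes u u' v v' :: "'a \<Rightarrow>\<^sub>0 'b::cancel_comm_monoid_add"
  assumes "Poly_Mapping.keys u \<union> Poly_Mapping.keys u' \<subseteq> P"
    and "Poly_Mapping.keys v \<union> Poly_Mapping.keys v' \<subseteq> Q" and "P \<inter> Q = {}"
    and "u + v = u' + v'"
  shows "u = u' \<and> v = v'"
proof -
  have "Poly_Mapping.lookup u x = Poly_Mapping.lookup u' x \<and> Poly_Mapping.lookup v x = Poly_Mapping.lookup v' x" for x
  proof -
    have "Poly_Mapping.lookup u x + Poly_Mapping.lookup v x = Poly_Mapping.lookup u' x + Poly_Mapping.lookup v' x"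
      using assms(4) by (metis lookup_add)
    moreover have "x \<notin> P \<Longrightarrow> Poly_Mapping.lookup u x = 0 \<and> Poly_Mapping.lookup u' x = 0"
      "x \<notin> Q \<Longrightarrow> Poly_Mapping.lookup v x = 0 \<and> Poly_Mapping.lookup v' x = 0"
      using assms(1,2) by (auto simp: in_keys_iff)
    ultimately show ?thesis
      using assms(3) by (cases "x \<in> P"; cases "x \<in> Q") auto
  qed
  then show ?thesis
    by (auto intro: poly_mapping_eqI)
qed

lemma bij_betw_segre_mon_pow:
  assumes "\<forall>g\<in>GA. Poly_Mapping.keys g \<subseteq> P" "\<forall>g\<in>GB. Poly_Mapping.keys g \<subseteq> Q" "P \<inter> Q = {}"
  shows "bij_betw (\<lambda>(u, v). u + v) (mon_pow GA d \<times> mon_pow GB d) (mon_pow (segre_gens GA GB) d)"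
  unfolding bij_betw_def
proof
  show "inj_on (\<lambda>(u, v). u + v) (mon_pow GA d \<times> mon_pow GB d)"
  proof (rule inj_onI, clarify)
    fix u v u' v' assume "u \<in> mon_pow GA d" "v \<in> mon_pow GB d" "u' \<in> mon_pow GA d"
      "v' \<in> mon_pow GB d" "u + v = u' + v'"
    then show "u = u' \<and> v = v'"
      using assms keys_mon_pow by (intro add_eq_add_disjoint_keys[of u u' P v v' Q]) blast+
  qed
  show "(\<lambda>(u, v). u + v) ` (mon_pow GA d \<times> mon_pow GB d) = mon_pow (segre_gens GA GB) d"
    unfolding mon_pow_segre_gens by force
qed

lemma bij_betw_segre_mon_pow_filtrations:
  assumes "one_filtration X c1 d1 m0 GA" "one_filtration Y c2 d2 n0 GB" "m0 \<le> m" "n0 \<le> n"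
  shows "bij_betw (\<lambda>(u, v). u + v) (mon_pow (GA m) d \<times> mon_pow (GB n) d)
    (mon_pow (segre_gens (GA m) (GB n)) d)"
proof (rule bij_betw_segre_mon_pow)
  show "\<forall>g\<in>GA m. Poly_Mapping.keys g \<subseteq> {X i j | i j. True}"
    using assms(1,3) unfolding one_filtration_def by blast
  show "\<forall>g\<in>GB n. Poly_Mapping.keys g \<subseteq> {Y i j | i j. True}"
    using assms(2,4) unfolding one_filtration_def by blast
qed auto

definition segre_left :: "seg_letter list \<Rightarrow> (nat + nat) list" where
  "segre_left w = concat (map (\<lambda>x. case x of T1 i \<Rightarrow> [Inl i] | T2 _ \<Rightarrow> [] | Gam i _ \<Rightarrow> [Inr i]) w)"

definition segre_right :: "seg_letter list \<Rightarrow> (nat + nat) list" where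
  "segre_right w = concat (map (\<lambda>x. case x of T1 _ \<Rightarrow> [] | T2 i \<Rightarrow> [Inl i] | Gam _ j \<Rightarrow> [Inr j]) w)"

definition segre_word ::
  "(nat list \<times> nat) list \<Rightarrow> nat list \<Rightarrow> (nat list \<times> nat) list \<Rightarrow> nat list \<Rightarrow> seg_letter list" where
  "segre_word ps ul qs vl = concat (map2 (\<lambda>(u, i) (v, j). map T1 u @ map T2 v @ [Gam i j]) ps qs)
     @ map T1 ul @ map T2 vl"

lemma segre_lang_eq_segre_word: "segre_lang LA LB = {segre_word ps ul qs vl | ps ul qs vl.
    length ps = length qs \<and> word_of ps ul \<in> LA \<and> word_of qs vl \<in> LB}"
  unfolding segre_lang_def segre_word_def ..

lemma segre_left_simps [simp]:
  "segre_left [] = []" "segre_left (x @ y) = segre_left x @ segre_left y"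
  "segre_left (map T1 u) = map Inl u" "segre_left (map T2 u) = []"
  "segre_left (Gam i j # w) = Inr i # segre_left w"
  by (induction u) (auto simp: segre_left_def)

lemma segre_right_simps [simp]:
  "segre_right [] = []" "segre_right (x @ y) = segre_right x @ segre_right y"
  "segre_right (map T1 u) = []" "segre_right (map T2 u) = map Inl u"
  "segre_right (Gam i j # w) = Inr j # segre_right w"
  by (induction u) (auto simp: segre_right_def)

lemma word_of_Nil: "word_of [] ul = map Inl ul"
  by (simp add: word_of_def)

lemma word_of_Cons: "word_of ((u, i) # ps) ul = map Inl u @ Inr i # word_of ps ul"
  by (simp add: word_of_def)

lemma segre_left_right_segre_word:
  "length ps = length qs \<Longrightarrow>
    segre_left (segre_word ps ul qs vl) = word_of ps ul \<and> segre_right (segre_word ps ul qs vl) = word_of qs vl"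
proof (induction ps arbitrary: qs)
  case Nil
  then show ?case
    by (simp add: segre_word_def word_of_Nil)
next
  case (Cons pi ps)
  obtain u i where "pi = (u, i)"
    by (cases pi)
  moreover obtain v j qs' where "qs = (v, j) # qs'" "length ps = length qs'"
    using Cons.prems by (cases qs) auto
  moreover have "segre_word ((u, i) # ps) ul ((v, j) # qs') vl
      = map T1 u @ map T2 v @ Gam i j # segre_word ps ul qs' vl"
    by (simp add: segre_word_def)
  ultimately show ?case
    using Cons.IH by (simp add: word_of_Cons)
qed

lemma length_filter_segre_left_right:
  "length (filter is_T1 w) = length (filter isl (segre_left w))"
  "length (filter is_T2 w) = length (filter isl (segre_right w))"
  "length (filter is_Gam w) = length (filter (\<lambda>x. \<not> isl x) (segre_left w))"
  "length (filter is_Gam w) = length (filter (\<lambda>x. \<not> isl x) (segre_right w))"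
  by (induction w) (auto simp: segre_left_def segre_right_def split: seg_letter.split)

lemma word_of_surj: "\<exists>ps ul. w = word_of ps ul"
proof (induction w)
  case Nil
  show ?case
    by (intro exI[of _ "[]"]) (simp add: word_of_Nil)
next
  case (Cons x w)
  then obtain ps ul where w: "w = word_of ps ul"
    by blast
  show ?case
  proof (cases x)
    case (Inl y)
    show ?thesis
    proof (cases ps)
      case Nil
      then show ?thesis
        using w Inl by (intro exI[of _ "[]"] exI[of _ "y # ul"]) (simp add: word_of_Nil)
    next
      case (Cons pi ps')
      obtain u i where "pi = (u, i)"
        by (cases pi)
      then show ?thesis
        using w Inl Cons by (intro exI[of _ "(y # u, i) # ps'"] exI[of _ ul]) (simp add: word_of_Cons)
    qed
  next
    case (Inr i)
    then show ?thesis
      using w by (intro exI[of _ "([], i) # ps"] exI[of _ ul]) (simp add: word_of_Cons)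
  qed
qed

lemma length_filter_word_of: "length (filter (\<lambda>x. \<not> isl x) (word_of ps ul)) = length ps"
  by (induction ps) (auto simp: word_of_def)

lemma map_Inl_Cons_Inr_eq:
  "map Inl u @ Inr i # r = map Inl u' @ Inr i' # r' \<Longrightarrow> u = u' \<and> i = i' \<and> r = r'"
proof (induction u arbitrary: u')
  case Nil
  then show ?case by (cases u') auto
next
  case (Cons a u)
  then show ?case by (cases u') auto
qed

lemma word_of_inj:
  assumes "word_of ps ul = word_of ps' ul'"
  shows "ps = ps' \<and> ul = ul'"
  using assms
proof (induction ps arbitrary: ps')
  case Nil
  show ?case
  proof (cases ps')
    case Nil
    then show ?thesis
      using Nil.prems by (simp add: word_of_Nil inj_map_eq_map)
  next
    case (Cons qi qs)
    obtain u i where "qi = (u, i)"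
      by (cases qi)
    then have "Inr i \<in> set (word_of ps' ul')"
      using Cons by (simp add: word_of_Cons)
    then have "Inr i \<in> set (word_of [] ul)"
      unfolding Nil.prems .
    then show ?thesis
      by (auto simp: word_of_Nil)
  qed
next
  case (Cons pi ps)
  obtain u i where pi: "pi = (u, i)"
    by (cases pi)
  show ?case
  proof (cases ps')
    case Nil
    have "Inr i \<in> set (word_of (pi # ps) ul)"
      by (simp add: pi word_of_Cons)
    then show ?thesis
      using Cons.prems Nil by (auto simp: word_of_Nil)
  next
    case (Cons qi qs)
    obtain u' i' where qi: "qi = (u', i')"
      by (cases qi)
    have "u = u' \<and> i = i' \<and> word_of ps ul = word_of qs ul'"
      using Cons.prems by (intro map_Inl_Cons_Inr_eq) (simp add: pi qi Cons word_of_Cons)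
    then show ?thesis
      using Cons.IH pi qi Cons by blast
  qed
qed

lemma inj_on_segre_left_right: "inj_on (\<lambda>w. (segre_left w, segre_right w)) (segre_lang LA LB)"
proof (rule inj_onI)
  fix w w' assume "w \<in> segre_lang LA LB" "w' \<in> segre_lang LA LB"
    and eq: "(segre_left w, segre_right w) = (segre_left w', segre_right w')"
  then obtain ps ul qs vl ps' ul' qs' vl' where
    w: "w = segre_word ps ul qs vl" "length ps = length qs" and
    w': "w' = segre_word ps' ul' qs' vl'" "length ps' = length qs'"
    unfolding segre_lang_eq_segre_word by blast
  have "word_of ps ul = word_of ps' ul'" "word_of qs vl = word_of qs' vl'"
    using eq segre_left_right_segre_word[OF w(2)] segre_left_right_segre_word[OF w'(2)] w(1) w'(1)
    by auto
  then show "w = w'"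
    using word_of_inj w(1) w'(1) by metis
qed

lemma segre_lang_merge:
  assumes "wA \<in> LA" "wB \<in> LB"
    and "length (filter (\<lambda>x. \<not> isl x) wA) = length (filter (\<lambda>x. \<not> isl x) wB)"
  obtains w where "w \<in> segre_lang LA LB" "segre_left w = wA" "segre_right w = wB"
proof -
  obtain ps ul qs vl where A: "wA = word_of ps ul" and B: "wB = word_of qs vl"
    using word_of_surj by metis
  have len: "length ps = length qs"
    using assms(3) A B length_filter_word_of by metis
  have "segre_word ps ul qs vl \<in> segre_lang LA LB"
    unfolding segre_lang_eq_segre_word using len A B assms(1,2) by blast
  moreover have "segre_left (segre_word ps ul qs vl) = wA" "segre_right (segre_word ps ul qs vl) = wB"
    using segre_left_right_segre_word[OF len] A B by auto
  ultimately show ?thesis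
    using that by blast
qed

lemma bij_betw_seg_count:
  "bij_betw (\<lambda>w. (segre_left w, segre_right w)) (seg_count (segre_lang LA LB) m n d)
    (count_lang LA m d \<times> count_lang LB n d)"
  unfolding bij_betw_def
proof
  show "inj_on (\<lambda>w. (segre_left w, segre_right w)) (seg_count (segre_lang LA LB) m n d)"
    by (rule inj_on_subset[OF inj_on_segre_left_right[of LA LB]]) (auto simp: seg_count_def)
  show "(\<lambda>w. (segre_left w, segre_right w)) ` seg_count (segre_lang LA LB) m n d
      = count_lang LA m d \<times> count_lang LB n d"
  proof (intro equalityI subsetI)
    fix x assume "x \<in> (\<lambda>w. (segre_left w, segre_right w)) ` seg_count (segre_lang LA LB) m n d"
    then obtain w where x: "x = (segre_left w, segre_right w)"
      and w: "w \<in> seg_count (segre_lang LA LB) m n d"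
      by blast
    then obtain ps ul qs vl where "w = segre_word ps ul qs vl" "length ps = length qs"
        "word_of ps ul \<in> LA" "word_of qs vl \<in> LB"
      unfolding seg_count_def segre_lang_eq_segre_word by blast
    then have "segre_left w \<in> LA" "segre_right w \<in> LB"
      using segre_left_right_segre_word by auto
    then show "x \<in> count_lang LA m d \<times> count_lang LB n d"
      using w length_filter_segre_left_right[of w] unfolding x count_lang_def seg_count_def by auto
  next
    fix x assume "x \<in> count_lang LA m d \<times> count_lang LB n d"
    then obtain wA wB where x: "x = (wA, wB)" and "wA \<in> count_lang LA m d" "wB \<in> count_lang LB n d"
      by blast
    then have "wA \<in> LA" "wB \<in> LB"
      "length (filter (\<lambda>x. \<not> isl x) wA) = length (filter (\<lambda>x. \<not> isl x) wB)"
      by (auto simp: count_lang_def)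
    then obtain w where "w \<in> segre_lang LA LB" "segre_left w = wA" "segre_right w = wB"
      by (rule segre_lang_merge)
    then show "x \<in> (\<lambda>w. (segre_left w, segre_right w)) ` seg_count (segre_lang LA LB) m n d"
      using length_filter_segre_left_right[of w] \<open>wA \<in> count_lang LA m d\<close> \<open>wB \<in> count_lang LB n d\<close>
      unfolding x seg_count_def count_lang_def by force
  qed
qed

lemma segre_filtration_represented:
  assumes "one_filtration X c1 d1 m0 GA" "one_filtration Y c2 d2 n0 GB"
    and "represented a p m0 GA LA" "represented b q n0 GB LB"
  shows "\<exists>M\<ge>m0. \<exists>N\<ge>n0. \<forall>m\<ge>M. \<forall>n\<ge>N. \<forall>d. \<exists>f.
    bij_betw f (mon_pow (segre_gens (GA m) (GB n)) d) (seg_count (segre_lang LA LB) m n d)"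
proof -
  obtain M where M: "M \<ge> m0" "\<forall>m\<ge>M. \<forall>d. \<exists>f. bij_betw f (mon_pow (GA m) d) (count_lang LA m d)"
    using assms(3) unfolding represented_def by blast
  obtain N where N: "N \<ge> n0" "\<forall>n\<ge>N. \<forall>d. \<exists>f. bij_betw f (mon_pow (GB n) d) (count_lang LB n d)"
    using assms(4) unfolding represented_def by blast
  have "\<exists>f. bij_betw f (mon_pow (segre_gens (GA m) (GB n)) d) (seg_count (segre_lang LA LB) m n d)"
    if mn: "m \<ge> M" "n \<ge> N" for m n d
  proof -
    obtain fA where "bij_betw fA (mon_pow (GA m) d) (count_lang LA m d)"
      using M mn by blast
    moreover obtain fB where "bij_betw fB (mon_pow (GB n) d) (count_lang LB n d)"
      using N mn by blast
    ultimately have "bij_betw (map_prod fA fB) (mon_pow (GA m) d \<times> mon_pow (GB n) d)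
        (count_lang LA m d \<times> count_lang LB n d)"
      by (rule bij_betw_map_prod)
    moreover have "bij_betw (\<lambda>(u, v). u + v) (mon_pow (GA m) d \<times> mon_pow (GB n) d)
        (mon_pow (segre_gens (GA m) (GB n)) d)"
      using bij_betw_segre_mon_pow_filtrations[OF assms(1,2)] M(1) N(1) mn by simp
    ultimately show ?thesis
      using bij_betw_seg_count by (meson bij_betw_inv_into bij_betw_trans)
  qed
  then show ?thesis
    using M(1) N(1) by blast
qed

section \<open>The equivariant Hilbert series\<close>

lemma rational3_of_rational_fps3:
  assumes "rational_fps3 (series3 g)"
  shows "rational3 g"
proof -
  obtain P Q where PQ: "poly3 P" "poly3 Q" "Q \<noteq> 0" "Q * series3 g = P"
    using assms rational_fps3_def by blast
  define Pf where "Pf = (\<lambda>(i, j, k). coeff3 P i j k)"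
  define Qf where "Qf = (\<lambda>(i, j, k). coeff3 Q i j k)"
  have "{x. Pf x \<noteq> 0} = support3 P" "{x. Qf x \<noteq> 0} = support3 Q"
    by (auto simp: Pf_def Qf_def support3_def)
  then have "finite {x. Pf x \<noteq> 0}" "finite {x. Qf x \<noteq> 0}"
    using PQ(1,2) poly3_def by auto
  moreover have "Qf \<noteq> (\<lambda>_. 0)"
    using PQ(3) fps3_eqI[of Q 0] by (auto simp: Qf_def fun_eq_iff)
  moreover have "conv3 Qf g = Pf"
  proof
    fix x :: "nat \<times> nat \<times> nat"
    obtain i j k where x: "x = (i, j, k)"
      by (cases x)
    have "conv3 Qf g x = coeff3 (Q * series3 g) i j k"
      unfolding x conv3_def coeff3_mult by (simp add: Qf_def)
    then show "conv3 Qf g x = Pf x"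
      using PQ(4) by (simp add: Pf_def x)
  qed
  ultimately show ?thesis
    unfolding rational3_def by blast
qed

lemma recognizable2_hilbert_filtration:
  assumes "one_filtration v c d1 m0 G" "represented a p m0 G L" "regular (sigma a p) L"
  shows "recognizable2 (\<lambda>(m, d). if m0 \<le> m then int (card (mon_pow (G m) d)) else 0)"
proof -
  obtain mt where mt: "mt \<ge> m0" "\<forall>m\<ge>mt. \<forall>d. \<exists>f. bij_betw f (mon_pow (G m) d) (count_lang L m d)"
    using assms(2) unfolding represented_def by blast
  have fin: "finite (G j)" if "m0 \<le> j" for j
    using assms(1) that unfolding one_filtration_def by blast
  let ?tail = "\<lambda>(m, d). if mt \<le> m then int (card (count_lang L m d)) else 0"
  let ?initial = "\<lambda>j (m, d). if j \<le> m then (\<lambda>(m, d). if m = 0 then int (card (mon_pow (G j) d)) else 0)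
      (m - j, d) else 0"
  have "recognizable2 ?tail"
    using recognizable2_restrict[OF recognizable2_regular_count[OF assms(3)], of mt]
    by (simp cong: if_cong)
  moreover have "recognizable2 (?initial j)" if "j \<in> {m0..<mt}" for j
    using recognizable2_shift_by[OF recognizable2_mon_pow[OF fin], of j j] that by (simp cong: if_cong)
  ultimately have "recognizable2 (\<lambda>x. ?tail x + (\<Sum>j\<in>{m0..<mt}. ?initial j x))"
    by (intro recognizable2_add recognizable2_sum)
  moreover have "(\<lambda>x. ?tail x + (\<Sum>j\<in>{m0..<mt}. ?initial j x))
      = (\<lambda>(m, d). if m0 \<le> m then int (card (mon_pow (G m) d)) else 0)"
  proof
    fix x :: "nat \<times> nat"
    obtain m d where x: "x = (m, d)"
      by (cases x)
    show "?tail x + (\<Sum>j\<in>{m0..<mt}. ?initial j x)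
        = (\<lambda>(m, d). if m0 \<le> m then int (card (mon_pow (G m) d)) else 0) x"
    proof (cases "mt \<le> m")
      case True
      then obtain f where "bij_betw f (mon_pow (G m) d) (count_lang L m d)"
        using mt(2) by blast
      then show ?thesis
        using True mt(1) by (simp add: x bij_betw_same_card)
    next
      case False
      have "(\<Sum>j\<in>{m0..<mt}. ?initial j x)
          = (\<Sum>j\<in>{m0..<mt}. if m = j then int (card (mon_pow (G j) d)) else 0)"
        by (intro sum.cong) (auto simp: x)
      then show ?thesis
        using False by (simp add: x)
    qed
  qed
  ultimately show ?thesis
    by simp
qed

lemma rational3_equivH:
  assumes "one_filtration X c1 d1 m0 GA" "one_filtration Y c2 d2 n0 GB"
    and "represented a p m0 GA LA" "represented b q n0 GB LB"
    and "regular (sigma a p) LA" "regular (sigma b q) LB"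
  shows "rational3 (equivH m0 n0 GA GB)"
proof -
  let ?hA = "\<lambda>(m, d). if m0 \<le> m then int (card (mon_pow (GA m) d)) else 0"
  let ?hB = "\<lambda>(n, d). if n0 \<le> n then int (card (mon_pow (GB n) d)) else 0"
  have "equivH m0 n0 GA GB (m, n, d) = ?hA (m, d) * ?hB (n, d)" for m n d
  proof (cases "m0 \<le> m \<and> n0 \<le> n")
    case True
    then have "card (mon_pow (segre_gens (GA m) (GB n)) d)
        = card (mon_pow (GA m) d) * card (mon_pow (GB n) d)"
      using bij_betw_same_card[OF bij_betw_segre_mon_pow_filtrations[OF assms(1,2)]]
      by (simp add: card_cartesian_product)
    then show ?thesis
      using True by (simp add: equivH_def)
  qed (auto simp: equivH_def)
  then have "equivH m0 n0 GA GB = (\<lambda>(m, n, d). ?hA (m, d) * ?hB (n, d))"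
    by (auto simp: fun_eq_iff)
  moreover have "rational_fps3 (series3 (\<lambda>(m, n, d). ?hA (m, d) * ?hB (n, d)))"
    using assms by (intro recognizable2_segre_rational recognizable2_hilbert_filtration)
  ultimately show ?thesis
    using rational3_of_rational_fps3 by simp
qed

theorem theorem3p7:
  fixes c1 c2 d1 d2 m0 n0 a p b q :: nat
    and GA GB :: "nat \<Rightarrow> monomial set"
    and LA LB :: "(nat + nat) list set"
  assumes "c1 \<ge> 1" and "c2 \<ge> 1"
    and "one_filtration X c1 d1 m0 GA" and "one_filtration Y c2 d2 n0 GB"
    and "represented a p m0 GA LA" and "represented b q n0 GB LB"
  shows "(\<exists>M\<ge>m0. \<exists>N\<ge>n0. \<forall>m\<ge>M. \<forall>n\<ge>N. \<forall>d. \<exists>f.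
            bij_betw f (mon_pow (segre_gens (GA m) (GB n)) d) (seg_count (segre_lang LA LB) m n d))
       \<and> (regular (sigma a p) LA \<and> regular (sigma b q) LB \<longrightarrow> rational3 (equivH m0 n0 GA GB))"
  using segre_filtration_represented[OF assms(3-6)] rational3_equivH[OF assms(3-6)] by blast

end
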